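(* For a unital algebra $A$ over a field $k$, there is a bijective correspondence between weak bialgebra structures on $A$ and weak multiplier bialgebra structures on $A$.
   Context: For a unital algebra $A$ one has $\mathbb M(A)=A$ and $\mathbb M(A\otimes A)=A\otimes A$. A weak bialgebra structure on a unital $k$-algebra $A$ is a coassociative, counital coalgebra structure $(\Delta,\epsilon)$ with multiplicative $\Delta:A\to A\otimes A$, such that $(\Delta\otimes\mathrm{id})\Delta(1)=(\Delta(1)\otimes1)(1\otimes\Delta(1))=(1\otimes\Delta(1))(\Delta(1)\otimes1)$ and $\epsilon(abc)=(\epsilon\otimes\epsilon)((a\otimes1)\Delta(b)(1\otimes c))=(\epsilon\otimes\epsilon)((a\otimes1)\Delta^{\mathrm{op}}(b)(1\otimes c))$ for all $a,b,c$, where $\Delta^{\mathrm{op}}=\mathsf{tw}\circ\Delta$ and $\mathsf{tw}(a\otimes b)=b\otimes a$. A weak multiplier bialgebra over $k$ is an idempotent algebra $A$ (i.e. $\mu:A\otimes A\to A$ surjective) with non-degenerate multiplication (($ab=0\ \forall a$)$\Rightarrow b=0$ and ($ba=0\ \forall a$)$\Rightarrow b=0$), with multiplier algebra $\mathbb M(A)$ (pairs $(\lambda,\rho)$ of linear maps $A\to A$ with $a\lambda(b)=\rho(a)b$, containing $A$ as a dense ideal; $A\otimes A\subseteq\mathbb M(A\otimes A)$), together with an idempotent $E\in\mathbb M(A\otimes A)$, a multiplicative linear $\Delta:A\to\mathbb M(A\otimes A)$ and a linear $\epsilon:A\to k$ such that: (i) $T_1(a\otimes b):=\Delta(a)(1\otimes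 b)$ and $T_2(a\otimes b):=(a\otimes1)\Delta(b)$ lie in $A\otimes A$; (ii) $(T_2\otimes\mathrm{id})(\mathrm{id}\otimes T_1)=(\mathrm{id}\otimes T_1)(T_2\otimes\mathrm{id})$; (iii) $(\epsilon\otimes\mathrm{id})T_1=\mu=(\mathrm{id}\otimes\epsilon)T_2$; (iv) $\langle\Delta(a)(b\otimes b')\rangle=\langle E(b\otimes b')\rangle$ and $\langle(b\otimes b')\Delta(a)\rangle=\langle(b\otimes b')E\rangle$ (linear spans over $a,b,b'\in A$); (v) $(E\otimes1)(1\otimes E)=E^{(3)}=(1\otimes E)(E\otimes1)$ where $E^{(3)}:=(\overline{\mathrm{id}\otimes\Delta})(E)=(\overline{\Delta\otimes\mathrm{id}})(E)$, with $\overline{\ \cdot\ }$ denoting the unique multiplicative extensions to multiplier algebras sending $1$ to the idempotent $E$ (resp. its appropriate leg), which exist by (iv); (vi) $(\epsilon\otimes\mathrm{id})((1\otimes a)E(b\otimes c))=(\epsilon\otimes\mathrm{id})(\Delta(a)(b\otimes c))$ and $(\epsilon\otimes\mathrm{id})((a\otimes b)E(1\otimes c))=(\epsilon\otimes\mathrm{id})((a\otimes b)\Delta(c))$ for all $a,b,c\in A$. *)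

theory Defs
  imports "HOL-Library.Poly_Mapping"
begin

text \<open>Vector spaces over a field 'k are modelled as free modules 'b =>0 'k
(finitely supported functions on a basis 'b). Every k-vector space is of this
form up to isomorphism; tensor products are then concrete:
(X =>0 k) tensor (Y =>0 k) = (X * Y =>0 k).\<close>

definition sc :: "'k::field \<Rightarrow> ('a \<Rightarrow>\<^sub>0 'k) \<Rightarrow> ('a \<Rightarrow>\<^sub>0 'k)" where
  "sc c x = Poly_Mapping.map ((*) c) x"

definition bv :: "'a \<Rightarrow> ('a \<Rightarrow>\<^sub>0 'k::field)" where
  "bv i = Poly_Mapping.single i 1"

definition klinear :: "(('a \<Rightarrow>\<^sub>0 'k::field) \<Rightarrow> ('c \<Rightarrow>\<^sub>0 'k)) \<Rightarrow> bool" where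
  "klinear f \<longleftrightarrow> (\<forall>x y. f (x + y) = f x + f y) \<and> (\<forall>c x. f (sc c x) = sc c (f x))"

definition kfunctional :: "(('a \<Rightarrow>\<^sub>0 'k::field) \<Rightarrow> 'k) \<Rightarrow> bool" where
  "kfunctional f \<longleftrightarrow> (\<forall>x y. f (x + y) = f x + f y) \<and> (\<forall>c x. f (sc c x) = c * f x)"

definition kbilinear :: "(('a \<Rightarrow>\<^sub>0 'k::field) \<Rightarrow> ('a \<Rightarrow>\<^sub>0 'k) \<Rightarrow> ('a \<Rightarrow>\<^sub>0 'k)) \<Rightarrow> bool" where
  "kbilinear m \<longleftrightarrow> (\<forall>a. klinear (m a)) \<and> (\<forall>b. klinear (\<lambda>a. m a b))"

definition kspan :: "('a \<Rightarrow>\<^sub>0 'k::field) set \<Rightarrow> ('a \<Rightarrow>\<^sub>0 'k) set" where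
  "kspan S = {x. \<exists>F c. finite F \<and> F \<subseteq> S \<and> x = (\<Sum>s\<in>F. sc (c s) s)}"

definition lext :: "('a \<Rightarrow> ('c \<Rightarrow>\<^sub>0 'k::field)) \<Rightarrow> ('a \<Rightarrow>\<^sub>0 'k) \<Rightarrow> ('c \<Rightarrow>\<^sub>0 'k)" where
  "lext f x = (\<Sum>p\<in>Poly_Mapping.keys x. sc (Poly_Mapping.lookup x p) (f p))"

definition lextk :: "('a \<Rightarrow> 'k::field) \<Rightarrow> ('a \<Rightarrow>\<^sub>0 'k) \<Rightarrow> 'k" where
  "lextk f x = (\<Sum>p\<in>Poly_Mapping.keys x. Poly_Mapping.lookup x p * f p)"

lift_definition tens :: "('a \<Rightarrow>\<^sub>0 'k::field) \<Rightarrow> ('b \<Rightarrow>\<^sub>0 'k) \<Rightarrow> ('a \<times> 'b \<Rightarrow>\<^sub>0 'k)"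
  is "\<lambda>x y p. x (fst p) * y (snd p)"
proof -
  fix x :: "'a \<Rightarrow> 'k" and y :: "'b \<Rightarrow> 'k"
  assume "finite {i. x i \<noteq> 0}" "finite {j. y j \<noteq> 0}"
  then have "finite ({i. x i \<noteq> 0} \<times> {j. y j \<noteq> 0})" by simp
  moreover have "{p. x (fst p) * y (snd p) \<noteq> 0} \<subseteq> {i. x i \<noteq> 0} \<times> {j. y j \<noteq> 0}" by auto
  ultimately show "finite {p. x (fst p) * y (snd p) \<noteq> 0}" by (rule finite_subset[rotated])
qed

definition tmap :: "(('a \<Rightarrow>\<^sub>0 'k::field) \<Rightarrow> ('c \<Rightarrow>\<^sub>0 'k)) \<Rightarrow> (('b \<Rightarrow>\<^sub>0 'k) \<Rightarrow> ('d \<Rightarrow>\<^sub>0 'k))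
    \<Rightarrow> ('a \<times> 'b \<Rightarrow>\<^sub>0 'k) \<Rightarrow> ('c \<times> 'd \<Rightarrow>\<^sub>0 'k)" where
  "tmap f g = lext (\<lambda>p. tens (f (bv (fst p))) (g (bv (snd p))))"

definition tmult :: "(('a \<Rightarrow>\<^sub>0 'k::field) \<Rightarrow> ('a \<Rightarrow>\<^sub>0 'k) \<Rightarrow> ('a \<Rightarrow>\<^sub>0 'k))
    \<Rightarrow> (('b \<Rightarrow>\<^sub>0 'k) \<Rightarrow> ('b \<Rightarrow>\<^sub>0 'k) \<Rightarrow> ('b \<Rightarrow>\<^sub>0 'k))
    \<Rightarrow> ('a \<times> 'b \<Rightarrow>\<^sub>0 'k) \<Rightarrow> ('a \<times> 'b \<Rightarrow>\<^sub>0 'k) \<Rightarrow> ('a \<times> 'b \<Rightarrow>\<^sub>0 'k)" where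
  "tmult mX mY x y = lext (\<lambda>p. lext (\<lambda>q.
      tens (mX (bv (fst p)) (bv (fst q))) (mY (bv (snd p)) (bv (snd q)))) y) x"

definition assocr :: "(('a \<times> 'b) \<times> 'c \<Rightarrow>\<^sub>0 'k::field) \<Rightarrow> ('a \<times> 'b \<times> 'c \<Rightarrow>\<^sub>0 'k)" where
  "assocr = lext (\<lambda>p. bv (fst (fst p), snd (fst p), snd p))"

definition assocl :: "('a \<times> 'b \<times> 'c \<Rightarrow>\<^sub>0 'k::field) \<Rightarrow> (('a \<times> 'b) \<times> 'c \<Rightarrow>\<^sub>0 'k)" where
  "assocl = lext (\<lambda>p. bv ((fst p, fst (snd p)), snd (snd p)))"

definition tw :: "('a \<times> 'b \<Rightarrow>\<^sub>0 'k::field) \<Rightarrow> ('b \<times> 'a \<Rightarrow>\<^sub>0 'k)" where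
  "tw = lext (\<lambda>p. bv (snd p, fst p))"

definition eps_id :: "(('a \<Rightarrow>\<^sub>0 'k::field) \<Rightarrow> 'k) \<Rightarrow> ('a \<times> 'b \<Rightarrow>\<^sub>0 'k) \<Rightarrow> ('b \<Rightarrow>\<^sub>0 'k)" where
  "eps_id \<epsilon> = lext (\<lambda>p. sc (\<epsilon> (bv (fst p))) (bv (snd p)))"

definition id_eps :: "(('b \<Rightarrow>\<^sub>0 'k::field) \<Rightarrow> 'k) \<Rightarrow> ('a \<times> 'b \<Rightarrow>\<^sub>0 'k) \<Rightarrow> ('a \<Rightarrow>\<^sub>0 'k)" where
  "id_eps \<epsilon> = lext (\<lambda>p. sc (\<epsilon> (bv (snd p))) (bv (fst p)))"

definition eps_eps :: "(('a \<Rightarrow>\<^sub>0 'k::field) \<Rightarrow> 'k) \<Rightarrow> ('a \<times> 'a \<Rightarrow>\<^sub>0 'k) \<Rightarrow> 'k" where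
  "eps_eps \<epsilon> = lextk (\<lambda>p. \<epsilon> (bv (fst p)) * \<epsilon> (bv (snd p)))"

definition mu :: "(('a \<Rightarrow>\<^sub>0 'k::field) \<Rightarrow> ('a \<Rightarrow>\<^sub>0 'k) \<Rightarrow> ('a \<Rightarrow>\<^sub>0 'k))
    \<Rightarrow> ('a \<times> 'a \<Rightarrow>\<^sub>0 'k) \<Rightarrow> ('a \<Rightarrow>\<^sub>0 'k)" where
  "mu m = lext (\<lambda>p. m (bv (fst p)) (bv (snd p)))"

definition kalgebra :: "(('a \<Rightarrow>\<^sub>0 'k::field) \<Rightarrow> ('a \<Rightarrow>\<^sub>0 'k) \<Rightarrow> ('a \<Rightarrow>\<^sub>0 'k)) \<Rightarrow> bool" where
  "kalgebra m \<longleftrightarrow> kbilinear m \<and> (\<forall>a b c. m (m a b) c = m a (m b c))"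

definition unital_algebra :: "(('a \<Rightarrow>\<^sub>0 'k::field) \<Rightarrow> ('a \<Rightarrow>\<^sub>0 'k) \<Rightarrow> ('a \<Rightarrow>\<^sub>0 'k)) \<Rightarrow> ('a \<Rightarrow>\<^sub>0 'k) \<Rightarrow> bool" where
  "unital_algebra m u \<longleftrightarrow> kalgebra m \<and> (\<forall>a. m u a = a \<and> m a u = a)"

definition weak_bialgebra ::
  "(('a \<Rightarrow>\<^sub>0 'k::field) \<Rightarrow> ('a \<Rightarrow>\<^sub>0 'k) \<Rightarrow> ('a \<Rightarrow>\<^sub>0 'k)) \<Rightarrow> ('a \<Rightarrow>\<^sub>0 'k)
   \<Rightarrow> (('a \<Rightarrow>\<^sub>0 'k) \<Rightarrow> ('a \<times> 'a \<Rightarrow>\<^sub>0 'k)) \<Rightarrow> (('a \<Rightarrow>\<^sub>0 'k) \<Rightarrow> 'k) \<Rightarrow> bool" where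
  "weak_bialgebra m u \<Delta> \<epsilon> \<longleftrightarrow>
     klinear \<Delta> \<and> kfunctional \<epsilon> \<and>
     (\<forall>a. assocr (tmap \<Delta> id (\<Delta> a)) = tmap id \<Delta> (\<Delta> a)) \<and>
     (\<forall>a. eps_id \<epsilon> (\<Delta> a) = a \<and> id_eps \<epsilon> (\<Delta> a) = a) \<and>
     (\<forall>a b. \<Delta> (m a b) = tmult m m (\<Delta> a) (\<Delta> b)) \<and>
     assocr (tmap \<Delta> id (\<Delta> u)) =
       tmult m (tmult m m) (assocr (tens (\<Delta> u) u)) (tens u (\<Delta> u)) \<and>
     assocr (tmap \<Delta> id (\<Delta> u)) =
       tmult m (tmult m m) (tens u (\<Delta> u)) (assocr (tens (\<Delta> u) u)) \<and>
     (\<forall>a b c.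
        \<epsilon> (m (m a b) c) = eps_eps \<epsilon> (tmult m m (tmult m m (tens a u) (\<Delta> b)) (tens u c)) \<and>
        \<epsilon> (m (m a b) c) = eps_eps \<epsilon> (tmult m m (tmult m m (tens a u) (tw (\<Delta> b))) (tens u c)))"

text \<open>A multiplier is a pair (lambda, rho) of linear maps; lambda is left
multiplication by the multiplier, rho right multiplication.\<close>

type_synonym ('a, 'k) mult = "(('a \<Rightarrow>\<^sub>0 'k) \<Rightarrow> ('a \<Rightarrow>\<^sub>0 'k)) \<times> (('a \<Rightarrow>\<^sub>0 'k) \<Rightarrow> ('a \<Rightarrow>\<^sub>0 'k))"

definition multipliers :: "(('a \<Rightarrow>\<^sub>0 'k::field) \<Rightarrow> ('a \<Rightarrow>\<^sub>0 'k) \<Rightarrow> ('a \<Rightarrow>\<^sub>0 'k)) \<Rightarrow> ('a, 'k) mult set" where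
  "multipliers m = {(l, r). klinear l \<and> klinear r \<and> (\<forall>a b. m a (l b) = m (r a) b)}"

definition iota :: "(('a \<Rightarrow>\<^sub>0 'k::field) \<Rightarrow> ('a \<Rightarrow>\<^sub>0 'k) \<Rightarrow> ('a \<Rightarrow>\<^sub>0 'k)) \<Rightarrow> ('a \<Rightarrow>\<^sub>0 'k) \<Rightarrow> ('a, 'k) mult" where
  "iota m x = (m x, \<lambda>y. m y x)"

definition mmul :: "('a, 'k::field) mult \<Rightarrow> ('a, 'k) mult \<Rightarrow> ('a, 'k) mult" where
  "mmul w w' = (fst w \<circ> fst w', snd w' \<circ> snd w)"

definition munit :: "('a, 'k::field) mult" where
  "munit = (id, id)"

definition madd :: "('a, 'k::field) mult \<Rightarrow> ('a, 'k) mult \<Rightarrow> ('a, 'k) mult" where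
  "madd w w' = (\<lambda>x. fst w x + fst w' x, \<lambda>x. snd w x + snd w' x)"

definition msc :: "'k::field \<Rightarrow> ('a, 'k) mult \<Rightarrow> ('a, 'k) mult" where
  "msc c w = (\<lambda>x. sc c (fst w x), \<lambda>x. sc c (snd w x))"

definition mlext :: "('c \<Rightarrow> ('a, 'k::field) mult) \<Rightarrow> ('c \<Rightarrow>\<^sub>0 'k) \<Rightarrow> ('a, 'k) mult" where
  "mlext f x = (\<lambda>y. \<Sum>p\<in>Poly_Mapping.keys x. sc (Poly_Mapping.lookup x p) (fst (f p) y),
                \<lambda>y. \<Sum>p\<in>Poly_Mapping.keys x. sc (Poly_Mapping.lookup x p) (snd (f p) y))"

definition one_tens :: "(('a \<Rightarrow>\<^sub>0 'k::field) \<Rightarrow> ('a \<Rightarrow>\<^sub>0 'k) \<Rightarrow> ('a \<Rightarrow>\<^sub>0 'k)) \<Rightarrow> ('a \<Rightarrow>\<^sub>0 'k) \<Rightarrow> ('a \<times> 'a, 'k) mult" where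
  "one_tens m b = (tmap id (m b), tmap id (\<lambda>y. m y b))"

definition tens_one :: "(('a \<Rightarrow>\<^sub>0 'k::field) \<Rightarrow> ('a \<Rightarrow>\<^sub>0 'k) \<Rightarrow> ('a \<Rightarrow>\<^sub>0 'k)) \<Rightarrow> ('a \<Rightarrow>\<^sub>0 'k) \<Rightarrow> ('a \<times> 'a, 'k) mult" where
  "tens_one m a = (tmap (m a) id, tmap (\<lambda>y. m y a) id)"

definition T1 :: "(('a \<Rightarrow>\<^sub>0 'k::field) \<Rightarrow> ('a \<Rightarrow>\<^sub>0 'k) \<Rightarrow> ('a \<Rightarrow>\<^sub>0 'k)) \<Rightarrow> (('a \<Rightarrow>\<^sub>0 'k) \<Rightarrow> ('a \<times> 'a, 'k) mult)
    \<Rightarrow> ('a \<times> 'a \<Rightarrow>\<^sub>0 'k) \<Rightarrow> ('a \<times> 'a \<Rightarrow>\<^sub>0 'k)" where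
  "T1 m D = lext (\<lambda>p. THE t. iota (tmult m m) t = mmul (D (bv (fst p))) (one_tens m (bv (snd p))))"

definition T2 :: "(('a \<Rightarrow>\<^sub>0 'k::field) \<Rightarrow> ('a \<Rightarrow>\<^sub>0 'k) \<Rightarrow> ('a \<Rightarrow>\<^sub>0 'k)) \<Rightarrow> (('a \<Rightarrow>\<^sub>0 'k) \<Rightarrow> ('a \<times> 'a, 'k) mult)
    \<Rightarrow> ('a \<times> 'a \<Rightarrow>\<^sub>0 'k) \<Rightarrow> ('a \<times> 'a \<Rightarrow>\<^sub>0 'k)" where
  "T2 m D = lext (\<lambda>p. THE t. iota (tmult m m) t = mmul (tens_one m (bv (fst p))) (D (bv (snd p))))"

definition id_Delta :: "(('a \<Rightarrow>\<^sub>0 'k::field) \<Rightarrow> ('a \<Rightarrow>\<^sub>0 'k) \<Rightarrow> ('a \<Rightarrow>\<^sub>0 'k)) \<Rightarrow> (('a \<Rightarrow>\<^sub>0 'k) \<Rightarrow> ('a \<times> 'a, 'k) mult)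
    \<Rightarrow> ('a \<times> 'a \<Rightarrow>\<^sub>0 'k) \<Rightarrow> ('a \<times> 'a \<times> 'a, 'k) mult" where
  "id_Delta m D = mlext (\<lambda>p. (tmap (m (bv (fst p))) (fst (D (bv (snd p)))),
                               tmap (\<lambda>y. m y (bv (fst p))) (snd (D (bv (snd p))))))"

definition Delta_id :: "(('a \<Rightarrow>\<^sub>0 'k::field) \<Rightarrow> ('a \<Rightarrow>\<^sub>0 'k) \<Rightarrow> ('a \<Rightarrow>\<^sub>0 'k)) \<Rightarrow> (('a \<Rightarrow>\<^sub>0 'k) \<Rightarrow> ('a \<times> 'a, 'k) mult)
    \<Rightarrow> ('a \<times> 'a \<Rightarrow>\<^sub>0 'k) \<Rightarrow> ('a \<times> 'a \<times> 'a, 'k) mult" where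
  "Delta_id m D = mlext (\<lambda>p. (assocr \<circ> tmap (fst (D (bv (fst p)))) (m (bv (snd p))) \<circ> assocl,
                               assocr \<circ> tmap (snd (D (bv (fst p)))) (\<lambda>y. m y (bv (snd p))) \<circ> assocl))"

definition E_tens_one :: "('a \<times> 'a, 'k::field) mult \<Rightarrow> ('a \<times> 'a \<times> 'a, 'k) mult" where
  "E_tens_one E = (assocr \<circ> tmap (fst E) id \<circ> assocl, assocr \<circ> tmap (snd E) id \<circ> assocl)"

definition one_tens_E :: "('a \<times> 'a, 'k::field) mult \<Rightarrow> ('a \<times> 'a \<times> 'a, 'k) mult" where
  "one_tens_E E = (tmap id (fst E), tmap id (snd E))"

definition is_mult_ext :: "(('a \<Rightarrow>\<^sub>0 'k::field) \<Rightarrow> ('a \<Rightarrow>\<^sub>0 'k) \<Rightarrow> ('a \<Rightarrow>\<^sub>0 'k))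
    \<Rightarrow> (('a \<times> 'a, 'k) mult \<Rightarrow> ('a \<times> 'a \<times> 'a, 'k) mult)
    \<Rightarrow> (('a \<times> 'a \<Rightarrow>\<^sub>0 'k) \<Rightarrow> ('a \<times> 'a \<times> 'a, 'k) mult) \<Rightarrow> ('a \<times> 'a \<times> 'a, 'k) mult \<Rightarrow> bool" where
  "is_mult_ext m \<Phi> \<phi> e \<longleftrightarrow>
     (\<forall>w\<in>multipliers (tmult m m). \<Phi> w \<in> multipliers (tmult m (tmult m m))) \<and>
     (\<forall>w\<in>multipliers (tmult m m). \<forall>w'\<in>multipliers (tmult m m). \<Phi> (mmul w w') = mmul (\<Phi> w) (\<Phi> w')) \<and>
     (\<forall>x. \<Phi> (iota (tmult m m) x) = \<phi> x) \<and>
     \<Phi> munit = e"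

definition weak_multiplier_bialgebra ::
  "(('a \<Rightarrow>\<^sub>0 'k::field) \<Rightarrow> ('a \<Rightarrow>\<^sub>0 'k) \<Rightarrow> ('a \<Rightarrow>\<^sub>0 'k)) \<Rightarrow> ('a \<times> 'a, 'k) mult
   \<Rightarrow> (('a \<Rightarrow>\<^sub>0 'k) \<Rightarrow> ('a \<times> 'a, 'k) mult) \<Rightarrow> (('a \<Rightarrow>\<^sub>0 'k) \<Rightarrow> 'k) \<Rightarrow> bool" where
  "weak_multiplier_bialgebra m E D \<epsilon> \<longleftrightarrow>
     kalgebra m \<and>
     \<comment> \<open>idempotent: mu surjective\<close>
     (\<forall>a. \<exists>t. mu m t = a) \<and>
     \<comment> \<open>non-degenerate multiplication\<close>
     (\<forall>b. (\<forall>a. m a b = 0) \<longrightarrow> b = 0) \<and> (\<forall>b. (\<forall>a. m b a = 0) \<longrightarrow> b = 0) \<and>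
     \<comment> \<open>E idempotent multiplier\<close>
     E \<in> multipliers (tmult m m) \<and> mmul E E = E \<and>
     \<comment> \<open>Delta : A -> M(A (x) A) linear and multiplicative, epsilon linear\<close>
     (\<forall>a. D a \<in> multipliers (tmult m m)) \<and>
     (\<forall>a b. D (a + b) = madd (D a) (D b)) \<and> (\<forall>c a. D (sc c a) = msc c (D a)) \<and>
     (\<forall>a b. D (m a b) = mmul (D a) (D b)) \<and>
     kfunctional \<epsilon> \<and>
     \<comment> \<open>(i)\<close>
     (\<forall>a b. (\<exists>t. iota (tmult m m) t = mmul (D a) (one_tens m b)) \<and>
            (\<exists>t. iota (tmult m m) t = mmul (tens_one m a) (D b))) \<and>
     \<comment> \<open>(ii)\<close>
     (\<forall>x. (assocr \<circ> tmap (T2 m D) id \<circ> assocl) (tmap id (T1 m D) x) =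
          tmap id (T1 m D) ((assocr \<circ> tmap (T2 m D) id \<circ> assocl) x)) \<and>
     \<comment> \<open>(iii)\<close>
     (\<forall>x. eps_id \<epsilon> (T1 m D x) = mu m x \<and> id_eps \<epsilon> (T2 m D x) = mu m x) \<and>
     \<comment> \<open>(iv)\<close>
     kspan {fst (D a) (tens b b') | a b b'. True} = kspan {fst E (tens b b') | b b'. True} \<and>
     kspan {snd (D a) (tens b b') | a b b'. True} = kspan {snd E (tens b b') | b b'. True} \<and>
     \<comment> \<open>(v)\<close>
     (\<exists>\<Phi>. is_mult_ext m \<Phi> (id_Delta m D) (one_tens_E E)) \<and>
     (\<exists>\<Psi>. is_mult_ext m \<Psi> (Delta_id m D) (E_tens_one E)) \<and>
     (\<forall>\<Phi> \<Psi>. is_mult_ext m \<Phi> (id_Delta m D) (one_tens_E E) \<longrightarrow>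
             is_mult_ext m \<Psi> (Delta_id m D) (E_tens_one E) \<longrightarrow>
             \<Phi> E = \<Psi> E \<and>
             mmul (E_tens_one E) (one_tens_E E) = \<Phi> E \<and>
             mmul (one_tens_E E) (E_tens_one E) = \<Phi> E) \<and>
     \<comment> \<open>(vi)\<close>
     (\<forall>a b c.
        eps_id \<epsilon> (tmap id (m a) (fst E (tens b c))) = eps_id \<epsilon> (fst (D a) (tens b c)) \<and>
        eps_id \<epsilon> (tmap id (\<lambda>y. m y c) (snd E (tens a b))) = eps_id \<epsilon> (snd (D c) (tens a b)))"

end

theory Submission
  imports Defs
begin

text \<open>For a unital algebra \<open>A\<close> every multiplier of \<open>A \<otimes> A\<close> is multiplication by an element,
  so a weak multiplier bialgebra structure \<open>(E, D, \<epsilon>)\<close> on \<open>A\<close> amounts to a linear multiplicative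
  \<open>\<Delta> : A \<rightarrow> A \<otimes> A\<close> together with an idempotent \<open>e \<in> A \<otimes> A\<close>, and axiom (iv) forces \<open>e = \<Delta>(1)\<close>.
  It remains to match the axioms one by one: (ii) is coassociativity (test it on \<open>1 \<otimes> b \<otimes> 1\<close>),
  (iii) is counitality, the multiplicative extensions in (v) are necessarily \<open>id \<otimes> \<Delta>\<close> and
  \<open>\<Delta> \<otimes> id\<close>, so that (v) is the weak multiplicativity of \<open>\<Delta>(1)\<close>, and (vi) is equivalent to the
  weak multiplicativity of \<open>\<epsilon>\<close>: both say that \<open>(\<epsilon> \<otimes> id)(\<Delta>(a)(b \<otimes> 1)) = a \<Pi>\<^sup>L(b)\<close> and its mirror
  image hold, together with \<open>\<epsilon>(ab) = \<epsilon>(a \<Pi>\<^sup>L(b))\<close> and its mirror image.\<close>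

lemma lookup_sc [simp]: "Poly_Mapping.lookup (sc c x) i = c * Poly_Mapping.lookup x i"
  by (simp add: sc_def Poly_Mapping.map.rep_eq when_def)

lemma lookup_bv: "Poly_Mapping.lookup (bv i) j = (if i = j then 1 else 0)"
  by (simp add: bv_def lookup_single)

lemma keys_bv [simp]: "Poly_Mapping.keys (bv i :: _ \<Rightarrow>\<^sub>0 'k::field) = {i}"
  by (simp add: bv_def)

lemma lookup_tens [simp]:
  "Poly_Mapping.lookup (tens x y) p = Poly_Mapping.lookup x (fst p) * Poly_Mapping.lookup y (snd p)"
  by (simp add: tens.rep_eq)

lemma sc_add_right: "sc c (x + y) = sc c x + sc c y"
  by (rule poly_mapping_eqI) (simp add: lookup_add algebra_simps)

lemma sc_add_left: "sc (c + d) x = sc c x + sc d x"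
  by (rule poly_mapping_eqI) (simp add: lookup_add algebra_simps)

lemma sc_sc: "sc c (sc d x) = sc (c * d) x"
  by (rule poly_mapping_eqI) (simp add: algebra_simps)

lemma sc_one [simp]: "sc 1 x = x"
  and sc_zero [simp]: "sc 0 x = 0"
  and sc_zero_right [simp]: "sc c 0 = 0"
  by (rule poly_mapping_eqI, simp)+

lemma sc_sum: "sc c (sum f S) = (\<Sum>s\<in>S. sc c (f s))"
  by (induct S rule: infinite_finite_induct) (auto simp: sc_add_right)

lemma klinearI:
  assumes "\<And>x y. f (x + y) = f x + f y" "\<And>c x. f (sc c x) = sc c (f x)"
  shows "klinear f"
  using assms unfolding klinear_def by blast

lemma klinear_add: "klinear f \<Longrightarrow> f (x + y) = f x + f y"
  and klinear_sc: "klinear f \<Longrightarrow> f (sc c x) = sc c (f x)"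
  unfolding klinear_def by blast+

lemma klinear_zero: "klinear f \<Longrightarrow> f 0 = 0"
  using klinear_sc[of f 0 0] by simp

lemma klinear_sum: "klinear f \<Longrightarrow> f (sum g S) = (\<Sum>s\<in>S. f (g s))"
  by (induct S rule: infinite_finite_induct) (auto simp: klinear_add klinear_zero)

lemma kfunctional_add: "kfunctional f \<Longrightarrow> f (x + y) = f x + f y"
  and kfunctional_sc: "kfunctional f \<Longrightarrow> f (sc c x) = c * f x"
  unfolding kfunctional_def by blast+

lemma kfunctional_zero: "kfunctional f \<Longrightarrow> f 0 = 0"
  using kfunctional_sc[of f 0 0] by simp

lemma kfunctional_sum: "kfunctional f \<Longrightarrow> f (sum g S) = (\<Sum>s\<in>S. f (g s))"
  by (induct S rule: infinite_finite_induct) (auto simp: kfunctional_add kfunctional_zero)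

lemma klinear_id [simp]: "klinear id"
  and klinear_ident [simp]: "klinear (\<lambda>x. x)"
  by (auto intro: klinearI)

lemma klinear_comp: "klinear f \<Longrightarrow> klinear g \<Longrightarrow> klinear (f \<circ> g)"
  and klinear_compose: "klinear f \<Longrightarrow> klinear g \<Longrightarrow> klinear (\<lambda>x. f (g x))"
  by (auto intro!: klinearI simp: klinear_add klinear_sc)

lemma klinear_sum_fun: "(\<And>s. s \<in> S \<Longrightarrow> klinear (f s)) \<Longrightarrow> klinear (\<lambda>x. \<Sum>s\<in>S. f s x)"
  by (auto intro!: klinearI simp: klinear_add klinear_sc sum.distrib sc_sum)

lemma klinear_sc_fun: "klinear f \<Longrightarrow> klinear (\<lambda>x. sc c (f x))"
  by (auto intro!: klinearI simp: klinear_add klinear_sc sc_add_right sc_sc mult.commute)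

lemma klinear_sc_functional: "kfunctional e \<Longrightarrow> klinear (\<lambda>a. sc (e a) b)"
  by (auto intro!: klinearI simp: kfunctional_add kfunctional_sc sc_add_left sc_sc)

lemma kfunctional_compose: "kfunctional f \<Longrightarrow> klinear g \<Longrightarrow> kfunctional (\<lambda>x. f (g x))"
  by (simp add: kfunctional_def klinear_add klinear_sc)

lemma kfunctional_mult_const: "kfunctional f \<Longrightarrow> kfunctional (\<lambda>x. f x * c)"
  and kfunctional_const_mult: "kfunctional f \<Longrightarrow> kfunctional (\<lambda>x. c * f x)"
  unfolding kfunctional_def by (simp_all add: algebra_simps)

lemma poly_mapping_sum_bv_superset:
  assumes "finite S" "Poly_Mapping.keys x \<subseteq> S"
  shows "x = (\<Sum>p\<in>S. sc (Poly_Mapping.lookup x p) (bv p))"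
proof (rule poly_mapping_eqI)
  fix k
  have "Poly_Mapping.lookup (\<Sum>p\<in>S. sc (Poly_Mapping.lookup x p) (bv p)) k
      = (\<Sum>p\<in>S. Poly_Mapping.lookup x p * (if p = k then 1 else 0))"
    by (simp add: lookup_sum lookup_bv)
  also have "\<dots> = (if k \<in> S then Poly_Mapping.lookup x k else 0)"
    using assms(1) by (simp add: if_distrib sum.delta cong: if_cong)
  also have "\<dots> = Poly_Mapping.lookup x k"
    using assms(2) by (auto simp: in_keys_iff)
  finally show "Poly_Mapping.lookup x k = Poly_Mapping.lookup (\<Sum>p\<in>S. sc (Poly_Mapping.lookup x p) (bv p)) k"
    by simp
qed

lemma poly_mapping_sum_bv: "x = (\<Sum>p\<in>Poly_Mapping.keys x. sc (Poly_Mapping.lookup x p) (bv p))"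
  by (rule poly_mapping_sum_bv_superset) auto

lemma lext_superset:
  assumes "finite S" "Poly_Mapping.keys x \<subseteq> S"
  shows "lext f x = (\<Sum>p\<in>S. sc (Poly_Mapping.lookup x p) (f p))"
  unfolding lext_def
  by (rule sum.mono_neutral_left) (use assms in \<open>auto simp: in_keys_iff\<close>)

lemma lextk_superset:
  assumes "finite S" "Poly_Mapping.keys x \<subseteq> S"
  shows "lextk f x = (\<Sum>p\<in>S. Poly_Mapping.lookup x p * f p)"
  unfolding lextk_def
  by (rule sum.mono_neutral_left) (use assms in \<open>auto simp: in_keys_iff\<close>)

lemma keys_add_subset: "Poly_Mapping.keys (x + y) \<subseteq> Poly_Mapping.keys x \<union> Poly_Mapping.keys y"
  by (auto simp: in_keys_iff lookup_add)

lemma keys_sc_subset: "Poly_Mapping.keys (sc c x) \<subseteq> Poly_Mapping.keys x"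
  by (auto simp: in_keys_iff)

lemma klinear_lext [simp]: "klinear (lext f :: ('a \<Rightarrow>\<^sub>0 'k::field) \<Rightarrow> _)"
proof (rule klinearI)
  fix x y :: "'a \<Rightarrow>\<^sub>0 'k"
  let ?S = "Poly_Mapping.keys x \<union> Poly_Mapping.keys y"
  have "lext f (x + y) = (\<Sum>p\<in>?S. sc (Poly_Mapping.lookup (x + y) p) (f p))"
    by (rule lext_superset) (auto dest: keys_add_subset[THEN subsetD])
  also have "\<dots> = lext f x + lext f y"
    by (simp add: lookup_add sc_add_left sum.distrib lext_superset[of ?S])
  finally show "lext f (x + y) = lext f x + lext f y" .
next
  fix c and x :: "'a \<Rightarrow>\<^sub>0 'k"
  have "lext f (sc c x) = (\<Sum>p\<in>Poly_Mapping.keys x. sc (Poly_Mapping.lookup (sc c x) p) (f p))"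
    by (rule lext_superset) (auto dest: keys_sc_subset[THEN subsetD])
  then show "lext f (sc c x) = sc c (lext f x)"
    by (simp add: lext_def sc_sum sc_sc)
qed

lemma kfunctional_lextk [simp]: "kfunctional (lextk f :: ('a \<Rightarrow>\<^sub>0 'k::field) \<Rightarrow> _)"
  unfolding kfunctional_def
proof safe
  fix x y :: "'a \<Rightarrow>\<^sub>0 'k"
  let ?S = "Poly_Mapping.keys x \<union> Poly_Mapping.keys y"
  have "lextk f (x + y) = (\<Sum>p\<in>?S. Poly_Mapping.lookup (x + y) p * f p)"
    by (rule lextk_superset) (auto dest: keys_add_subset[THEN subsetD])
  then show "lextk f (x + y) = lextk f x + lextk f y"
    by (simp add: lookup_add algebra_simps sum.distrib lextk_superset[of ?S])
next
  fix c and x :: "'a \<Rightarrow>\<^sub>0 'k"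
  have "lextk f (sc c x) = (\<Sum>p\<in>Poly_Mapping.keys x. Poly_Mapping.lookup (sc c x) p * f p)"
    by (rule lextk_superset) (auto dest: keys_sc_subset[THEN subsetD])
  then show "lextk f (sc c x) = c * lextk f x"
    by (simp add: lextk_def sum_distrib_left algebra_simps)
qed

lemma lext_bv [simp]: "lext f (bv p) = f p"
  and lextk_bv [simp]: "lextk g (bv p) = g p"
  by (simp_all add: lext_def lextk_def lookup_bv)

lemma klinear_eq_lext: "klinear g \<Longrightarrow> g x = lext (\<lambda>p. g (bv p)) x"
  by (subst (1) poly_mapping_sum_bv[of x]) (simp add: klinear_sum klinear_sc lext_def)

lemma klinear_basis_ext:
  assumes "klinear f" "klinear g" "\<And>p. f (bv p) = g (bv p)"
  shows "f x = g x"
  using klinear_eq_lext[OF assms(1), of x] klinear_eq_lext[OF assms(2), of x] assms(3) by simp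

lemma kfunctional_basis_ext:
  assumes "kfunctional f" "kfunctional g" "\<And>p. f (bv p) = g (bv p)"
  shows "f x = g x"
proof -
  have expand: "h x = (\<Sum>p\<in>Poly_Mapping.keys x. Poly_Mapping.lookup x p * h (bv p))"
    if "kfunctional h" for h
    by (subst poly_mapping_sum_bv) (simp add: kfunctional_sum[OF that] kfunctional_sc[OF that])
  show ?thesis using expand[OF assms(1)] expand[OF assms(2)] assms(3) by simp
qed

lemma bilinear_basis_ext:
  assumes "\<And>y. klinear (\<lambda>x. F x y)" "\<And>y. klinear (\<lambda>x. G x y)"
    "\<And>x. klinear (F x)" "\<And>x. klinear (G x)"
    "\<And>p q. F (bv p) (bv q) = G (bv p) (bv q)"
  shows "F x y = G x y"
proof -
  have "F (bv p) y = G (bv p) y" for p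
    by (rule klinear_basis_ext[OF assms(3,4)]) (rule assms(5))
  then show ?thesis by (rule klinear_basis_ext[where f="\<lambda>x. F x y" and g="\<lambda>x. G x y", OF assms(1,2)])
qed

lemma trilinear_basis_ext:
  assumes "\<And>y z. klinear (\<lambda>x. F x y z)" "\<And>y z. klinear (\<lambda>x. G x y z)"
    "\<And>x z. klinear (\<lambda>y. F x y z)" "\<And>x z. klinear (\<lambda>y. G x y z)"
    "\<And>x y. klinear (F x y)" "\<And>x y. klinear (G x y)"
    "\<And>p q r. F (bv p) (bv q) (bv r) = G (bv p) (bv q) (bv r)"
  shows "F x y z = G x y z"
proof -
  have "F (bv p) (bv q) z = G (bv p) (bv q) z" for p q
    by (rule klinear_basis_ext[OF assms(5,6)]) (rule assms(7))
  then show ?thesis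
    by (rule bilinear_basis_ext[where F="\<lambda>x y. F x y z" and G="\<lambda>x y. G x y z", OF assms(1-4)])
qed

lemma tens_add_left: "tens (x + y) z = tens x z + tens y z"
  and tens_add_right: "tens z (x + y) = tens z x + tens z y"
  by (rule poly_mapping_eqI, simp add: lookup_add algebra_simps)+

lemma tens_sc_left: "tens (sc c x) y = sc c (tens x y)"
  and tens_sc_right: "tens x (sc c y) = sc c (tens x y)"
  by (rule poly_mapping_eqI, simp add: algebra_simps)+

lemma tens_bv: "tens (bv i) (bv j) = bv (i, j)"
  by (rule poly_mapping_eqI) (auto simp: lookup_bv)

lemma klinear_tens_right [simp]: "klinear (tens x)"
  and klinear_tens_left [simp]: "klinear (\<lambda>x. tens x y)"
  by (auto intro!: klinearI simp: tens_add_right tens_sc_right tens_add_left tens_sc_left)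

lemma bv_pair: "bv p = tens (bv (fst p)) (bv (snd p))"
  and bv_triple_left: "bv q = tens (tens (bv (fst (fst q))) (bv (snd (fst q)))) (bv (snd q))"
  by (simp_all add: tens_bv)

lemma klinear_tens_ext:
  assumes "klinear f" "klinear g" "\<And>x y. f (tens x y) = g (tens x y)"
  shows "f z = g z"
  by (rule klinear_basis_ext[OF assms(1,2)]) (metis bv_pair assms(3))

lemma klinear_tens3_ext:
  assumes "klinear f" "klinear g" "\<And>x y z. f (tens x (tens y z)) = g (tens x (tens y z))"
  shows "f w = g w"
  by (rule klinear_basis_ext[OF assms(1,2)]) (metis bv_pair assms(3))

lemma kfunctional_tens_ext:
  assumes "kfunctional f" "kfunctional g" "\<And>x y. f (tens x y) = g (tens x y)"
  shows "f z = g z"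
  by (rule kfunctional_basis_ext[OF assms(1,2)]) (metis bv_pair assms(3))

lemma bilinear_tens_ext:
  assumes "\<And>y. klinear (\<lambda>x. F x y)" "\<And>y. klinear (\<lambda>x. G x y)"
    "\<And>x. klinear (F x)" "\<And>x. klinear (G x)"
    "\<And>a b c d. F (tens a b) (tens c d) = G (tens a b) (tens c d)"
  shows "F x y = G x y"
  by (rule bilinear_basis_ext[OF assms(1-4)]) (metis bv_pair assms(5))

lemma bilinear_tens3_left_ext:
  assumes "\<And>y. klinear (\<lambda>x. F x y)" "\<And>y. klinear (\<lambda>x. G x y)"
    "\<And>x. klinear (F x)" "\<And>x. klinear (G x)"
    "\<And>a b c a' b' c'. F (tens (tens a b) c) (tens (tens a' b') c') = G (tens (tens a b) c) (tens (tens a' b') c')"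
  shows "F x y = G x y"
  by (rule bilinear_basis_ext[OF assms(1-4)]) (metis bv_triple_left assms(5))

lemma klinear_tens_arg1: "klinear f \<Longrightarrow> klinear (\<lambda>x. f (tens x y))"
  and klinear_tens_arg2: "klinear f \<Longrightarrow> klinear (\<lambda>y. f (tens x y))"
  by (rule klinear_compose[OF _ klinear_tens_left], assumption)
     (rule klinear_compose[OF _ klinear_tens_right], assumption)

lemma klinear_tmap [simp]: "klinear (tmap f g)"
  unfolding tmap_def by simp

lemma tmap_tens:
  assumes "klinear f" "klinear g"
  shows "tmap f g (tens x y) = tens (f x) (g y)"
proof (rule bilinear_basis_ext[where F="\<lambda>x y. tmap f g (tens x y)" and G="\<lambda>x y. tens (f x) (g y)"])
  show "klinear (\<lambda>x. tmap f g (tens x y))" "klinear (\<lambda>y. tmap f g (tens x y))" for x y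
    by (simp_all add: klinear_tens_arg1 klinear_tens_arg2)
  show "klinear (\<lambda>x. tens (f x) (g y))" for y
    by (rule klinear_compose[OF klinear_tens_left assms(1)])
  show "klinear (\<lambda>y. tens (f x) (g y))" for x
    by (rule klinear_compose[OF klinear_tens_right assms(2)])
qed (simp add: tmap_def tens_bv)

lemma tmap_id_compose:
  assumes "klinear f" "klinear g"
  shows "tmap id f (tmap id g x) = tmap id (\<lambda>y. f (g y)) x"
  by (rule klinear_tens_ext[where f="\<lambda>x. tmap id f (tmap id g x)"])
     (simp_all add: klinear_compose assms tmap_tens)

lemma klinear_tmult_left [simp]: "klinear (\<lambda>x. tmult mX mY x y)"
  unfolding tmult_def by simp

lemma klinear_lext_param: "(\<And>p. klinear (F p)) \<Longrightarrow> klinear (\<lambda>y. lext (\<lambda>p. F p y) x)"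
  unfolding lext_def[of _ x] by (intro klinear_sum_fun klinear_sc_fun) auto

lemma klinear_tmult_right [simp]: "klinear (tmult mX mY x)"
  unfolding tmult_def by (rule klinear_lext_param) simp

lemma kbilinear_tmult [simp]: "kbilinear (tmult mX mY)"
  unfolding kbilinear_def by simp

lemma kbilinear_left: "kbilinear m \<Longrightarrow> klinear (\<lambda>a. m a b)"
  and kbilinear_right: "kbilinear m \<Longrightarrow> klinear (m a)"
  unfolding kbilinear_def by auto

lemma tmult_tens:
  assumes X: "kbilinear mX" and Y: "kbilinear mY"
  shows "tmult mX mY (tens a b) (tens c d) = tens (mX a c) (mY b d)"
proof -
  have basis: "tmult mX mY (tens (bv i) (bv j)) (tens c d) = tens (mX (bv i) c) (mY (bv j) d)" for i j
  proof (rule bilinear_basis_ext[where F="\<lambda>c d. tmult mX mY (tens (bv i) (bv j)) (tens c d)"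
                        and G="\<lambda>c d. tens (mX (bv i) c) (mY (bv j) d)"])
    show "klinear (\<lambda>c. tens (mX (bv i) c) (mY (bv j) d))" for d
      by (rule klinear_compose[OF klinear_tens_left kbilinear_right[OF X]])
    show "klinear (\<lambda>d. tens (mX (bv i) c) (mY (bv j) d))" for c
      by (rule klinear_compose[OF klinear_tens_right kbilinear_right[OF Y]])
  qed (simp_all add: klinear_tens_arg1 klinear_tens_arg2 tens_bv tmult_def)
  show ?thesis
  proof (rule bilinear_basis_ext[where F="\<lambda>a b. tmult mX mY (tens a b) (tens c d)"
                        and G="\<lambda>a b. tens (mX a c) (mY b d)"])
    show "klinear (\<lambda>a. tens (mX a c) (mY b d))" for b
      by (rule klinear_compose[OF klinear_tens_left kbilinear_left[OF X]])
    show "klinear (\<lambda>b. tens (mX a c) (mY b d))" for a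
      by (rule klinear_compose[OF klinear_tens_right kbilinear_left[OF Y]])
  qed (simp_all add: klinear_tens_arg1[OF klinear_tmult_left] klinear_tens_arg2[OF klinear_tmult_left] basis)
qed

lemma kalgebra_bilinear: "kalgebra m \<Longrightarrow> kbilinear m"
  and kalgebra_assoc: "kalgebra m \<Longrightarrow> m (m a b) c = m a (m b c)"
  unfolding kalgebra_def by auto

lemma kalgebra_tmult:
  assumes X: "kalgebra mX" and Y: "kalgebra mY"
  shows "kalgebra (tmult mX mY)"
proof -
  let ?T = "tmult mX mY"
  have bX: "kbilinear mX" and bY: "kbilinear mY" using X Y by (auto dest: kalgebra_bilinear)
  have tens: "?T (?T (tens a b) (tens c d)) (tens e f) = ?T (tens a b) (?T (tens c d) (tens e f))"
    for a b c d e f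
    by (simp add: tmult_tens[OF bX bY] kalgebra_assoc[OF X] kalgebra_assoc[OF Y])
  have tens2: "?T (?T x (tens c d)) (tens e f) = ?T x (?T (tens c d) (tens e f))" for x c d e f
    by (rule klinear_tens_ext[where f="\<lambda>x. ?T (?T x (tens c d)) (tens e f)"])
       (auto intro: klinear_compose[OF klinear_tmult_left klinear_tmult_left] simp: tens)
  have tens1: "?T (?T x y) (tens e f) = ?T x (?T y (tens e f))" for x y e f
    by (rule klinear_tens_ext[where f="\<lambda>y. ?T (?T x y) (tens e f)" and g="\<lambda>y. ?T x (?T y (tens e f))"])
       (auto intro: klinear_compose[OF klinear_tmult_left klinear_tmult_right]
          klinear_compose[OF klinear_tmult_right klinear_tmult_left] simp: tens2)
  have "?T (?T x y) z = ?T x (?T y z)" for x y z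
    by (rule klinear_tens_ext[where f="\<lambda>z. ?T (?T x y) z" and g="\<lambda>z. ?T x (?T y z)"])
       (auto intro: klinear_compose[OF klinear_tmult_right klinear_tmult_right] simp: tens1)
  then show ?thesis unfolding kalgebra_def by simp
qed

lemma unital_algebra_bilinear: "unital_algebra m e \<Longrightarrow> kbilinear m"
  and unital_algebra_algebra: "unital_algebra m e \<Longrightarrow> kalgebra m"
  and unital_algebra_unit_left: "unital_algebra m e \<Longrightarrow> m e a = a"
  and unital_algebra_unit_right: "unital_algebra m e \<Longrightarrow> m a e = a"
  unfolding unital_algebra_def by (auto dest: kalgebra_bilinear)

lemma unital_algebra_tmult:
  assumes X: "unital_algebra mX uX" and Y: "unital_algebra mY uY"
  shows "unital_algebra (tmult mX mY) (tens uX uY)"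
proof -
  have bX: "kbilinear mX" and bY: "kbilinear mY"
    using X Y by (auto dest: unital_algebra_bilinear)
  note units = unital_algebra_unit_left[OF X] unital_algebra_unit_right[OF X]
    unital_algebra_unit_left[OF Y] unital_algebra_unit_right[OF Y]
  have "tmult mX mY (tens uX uY) x = x" for x
    by (rule klinear_tens_ext[where f="tmult mX mY (tens uX uY)" and g="\<lambda>x. x"])
       (auto simp: tmult_tens[OF bX bY] units)
  moreover have "tmult mX mY x (tens uX uY) = x" for x
    by (rule klinear_tens_ext[where f="\<lambda>x. tmult mX mY x (tens uX uY)" and g="\<lambda>x. x"])
       (auto simp: tmult_tens[OF bX bY] units)
  ultimately show ?thesis
    using kalgebra_tmult unital_algebra_algebra X Y unfolding unital_algebra_def by auto
qed

lemma klinear_assocr [simp]: "klinear assocr"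
  and klinear_assocl [simp]: "klinear assocl"
  and klinear_tw [simp]: "klinear tw"
  and klinear_eps_id [simp]: "klinear (eps_id e)"
  and klinear_id_eps [simp]: "klinear (id_eps e')"
  and klinear_mu [simp]: "klinear (mu m)"
  and kfunctional_eps_eps [simp]: "kfunctional (eps_eps e'')"
  unfolding assocr_def assocl_def tw_def eps_id_def id_eps_def mu_def eps_eps_def by simp_all

lemma assocr_tens: "assocr (tens (tens a b) c) = tens a (tens b c)"
  by (rule trilinear_basis_ext[where F="\<lambda>a b c. assocr (tens (tens a b) c)" and G="\<lambda>a b c. tens a (tens b c)"])
     (intro klinear_tens_arg1 klinear_tens_arg2 klinear_assocr klinear_tens_right klinear_tens_left klinear_ident
      | simp add: tens_bv assocr_def)+

lemma assocl_tens: "assocl (tens a (tens b c)) = tens (tens a b) c"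
  by (rule trilinear_basis_ext[where F="\<lambda>a b c. assocl (tens a (tens b c))" and G="\<lambda>a b c. tens (tens a b) c"])
     (intro klinear_tens_arg1 klinear_tens_arg2 klinear_assocl klinear_tens_right klinear_tens_left klinear_ident
      | simp add: tens_bv assocl_def)+

lemma tw_tens: "tw (tens a b) = tens b a"
  by (rule bilinear_basis_ext[where F="\<lambda>a b. tw (tens a b)" and G="\<lambda>a b. tens b a"])
     (intro klinear_tens_arg1 klinear_tens_arg2 klinear_tw klinear_tens_right klinear_tens_left klinear_ident
      | simp add: tens_bv tw_def)+

lemma eps_id_tens: "kfunctional e \<Longrightarrow> eps_id e (tens a b) = sc (e a) b"
  by (rule bilinear_basis_ext[where F="\<lambda>a b. eps_id e (tens a b)" and G="\<lambda>a b. sc (e a) b"])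
     (intro klinear_tens_arg1 klinear_tens_arg2 klinear_eps_id klinear_sc_functional klinear_sc_fun klinear_ident
      | simp add: tens_bv eps_id_def)+

lemma id_eps_tens: "kfunctional e \<Longrightarrow> id_eps e (tens a b) = sc (e b) a"
  by (rule bilinear_basis_ext[where F="\<lambda>a b. id_eps e (tens a b)" and G="\<lambda>a b. sc (e b) a"])
     (intro klinear_tens_arg1 klinear_tens_arg2 klinear_id_eps klinear_sc_functional klinear_sc_fun klinear_ident
      | simp add: tens_bv id_eps_def)+

lemma mu_tens: "kbilinear m \<Longrightarrow> mu m (tens a b) = m a b"
  by (rule bilinear_basis_ext[where F="\<lambda>a b. mu m (tens a b)" and G="\<lambda>a b. m a b"])
     (intro klinear_tens_arg1 klinear_tens_arg2 klinear_mu kbilinear_left kbilinear_right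
      | simp add: tens_bv mu_def)+

lemma eps_eps_tens:
  assumes "kfunctional e"
  shows "eps_eps e (tens a b) = e a * e b"
proof -
  have basis: "eps_eps e (tens a (bv q)) = e a * e (bv q)" for q
  proof (rule kfunctional_basis_ext[where f="\<lambda>a. eps_eps e (tens a (bv q))"])
    show "kfunctional (\<lambda>a. eps_eps e (tens a (bv q)))"
      by (rule kfunctional_compose[OF kfunctional_eps_eps klinear_tens_left])
  qed (simp_all add: kfunctional_mult_const assms tens_bv eps_eps_def)
  show ?thesis
  proof (rule kfunctional_basis_ext[where f="\<lambda>b. eps_eps e (tens a b)"])
    show "kfunctional (\<lambda>b. eps_eps e (tens a b))"
      by (rule kfunctional_compose[OF kfunctional_eps_eps klinear_tens_right])
  qed (simp_all add: kfunctional_const_mult assms basis)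
qed

lemma klinear_comp_tmult_left: "klinear g \<Longrightarrow> klinear (\<lambda>x. tmult mX mY (g x) y)"
  by (rule klinear_compose[rotated], assumption, simp)

lemma klinear_comp_tmult_right: "klinear g \<Longrightarrow> klinear (\<lambda>x. tmult mX mY y (g x))"
  by (rule klinear_compose[rotated], assumption, simp)

lemma klinear_comp_tmap: "klinear g \<Longrightarrow> klinear (\<lambda>x. tmap f1 f2 (g x))"
  by (rule klinear_compose[rotated], assumption, simp)

lemma klinear_comp_tens_left: "klinear g \<Longrightarrow> klinear (\<lambda>x. tens (g x) y)"
  by (rule klinear_compose[rotated], assumption, simp)

lemma klinear_comp_tens_right: "klinear g \<Longrightarrow> klinear (\<lambda>x. tens y (g x))"
  by (rule klinear_compose[rotated], assumption, simp)

lemma klinear_comp_assocr: "klinear g \<Longrightarrow> klinear (\<lambda>x. assocr (g x))"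
  by (rule klinear_compose[rotated], assumption, simp)

lemma klinear_comp_assocl: "klinear g \<Longrightarrow> klinear (\<lambda>x. assocl (g x))"
  by (rule klinear_compose[rotated], assumption, simp)

lemma klinear_comp_tw: "klinear g \<Longrightarrow> klinear (\<lambda>x. tw (g x))"
  by (rule klinear_compose[rotated], assumption, simp)

lemma klinear_comp_eps_id: "klinear g \<Longrightarrow> klinear (\<lambda>x. eps_id e (g x))"
  by (rule klinear_compose[rotated], assumption, simp)

lemma klinear_comp_id_eps: "klinear g \<Longrightarrow> klinear (\<lambda>x. id_eps e (g x))"
  by (rule klinear_compose[rotated], assumption, simp)

lemma klinear_comp_mu: "klinear g \<Longrightarrow> klinear (\<lambda>x. mu m (g x))"
  by (rule klinear_compose[rotated], assumption, simp)

lemma kfunctional_comp_eps_eps: "klinear g \<Longrightarrow> kfunctional (\<lambda>x. eps_eps e (g x))"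
  by (rule kfunctional_compose[OF kfunctional_eps_eps])

lemmas klinear_comp_intros = klinear_comp_tmult_left klinear_comp_tmult_right klinear_comp_tmap
  klinear_comp_tens_left klinear_comp_tens_right klinear_comp_assocr klinear_comp_assocl
  klinear_comp_tw klinear_comp_eps_id klinear_comp_id_eps klinear_comp_mu klinear_sc_fun
  klinear_ident klinear_id

definition algebra_hom :: "(('a \<Rightarrow>\<^sub>0 'k::field) \<Rightarrow> ('c \<Rightarrow>\<^sub>0 'k)) \<Rightarrow> (('a \<Rightarrow>\<^sub>0 'k) \<Rightarrow> ('a \<Rightarrow>\<^sub>0 'k) \<Rightarrow> ('a \<Rightarrow>\<^sub>0 'k))
   \<Rightarrow> (('c \<Rightarrow>\<^sub>0 'k) \<Rightarrow> ('c \<Rightarrow>\<^sub>0 'k) \<Rightarrow> ('c \<Rightarrow>\<^sub>0 'k)) \<Rightarrow> bool" where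
  "algebra_hom f mA mB \<longleftrightarrow> klinear f \<and> (\<forall>a b. f (mA a b) = mB (f a) (f b))"

lemma tmap_tmult:
  assumes f: "algebra_hom f mA mA'" and g: "algebra_hom g mB mB'"
    and b: "kbilinear mA" "kbilinear mB" "kbilinear mA'" "kbilinear mB'"
  shows "tmap f g (tmult mA mB x y) = tmult mA' mB' (tmap f g x) (tmap f g y)"
proof -
  have lf: "klinear f" and lg: "klinear g" and hf: "\<And>a b. f (mA a b) = mA' (f a) (f b)"
    and hg: "\<And>a b. g (mB a b) = mB' (g a) (g b)"
    using f g unfolding algebra_hom_def by auto
  show ?thesis
    by (rule bilinear_tens_ext[where F="\<lambda>x y. tmap f g (tmult mA mB x y)"
          and G="\<lambda>x y. tmult mA' mB' (tmap f g x) (tmap f g y)"])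
       (intro klinear_comp_intros | simp add: tmult_tens b tmap_tens lf lg hf hg)+
qed

lemma assocr_tmult:
  assumes "kbilinear mA" "kbilinear mB" "kbilinear mC"
  shows "assocr (tmult (tmult mA mB) mC x y) = tmult mA (tmult mB mC) (assocr x) (assocr y)"
  by (rule bilinear_tens3_left_ext[where F="\<lambda>x y. assocr (tmult (tmult mA mB) mC x y)"
        and G="\<lambda>x y. tmult mA (tmult mB mC) (assocr x) (assocr y)"])
     (intro klinear_comp_intros | simp add: tmult_tens assms assocr_tens)+

subsection \<open>Multipliers of a unital algebra\<close>

lemma iota_multipliers: "kalgebra M \<Longrightarrow> iota M x \<in> multipliers M"
  unfolding iota_def multipliers_def
  by (auto simp: kalgebra_assoc dest: kalgebra_bilinear intro: kbilinear_left kbilinear_right)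

lemma multipliers_iota:
  assumes "unital_algebra M e" "w \<in> multipliers M"
  shows "w = iota M (snd w e)"
proof -
  obtain l r where w: "w = (l, r)" by (cases w)
  have comm: "M a (l b) = M (r a) b" for a b using assms(2) w unfolding multipliers_def by auto
  have l: "l b = M (r e) b" for b
    using comm[of e b] unital_algebra_unit_left[OF assms(1)] by simp
  have r: "r a = M a (l e)" for a
    using comm[of a e] unital_algebra_unit_right[OF assms(1)] by simp
  have "l e = r e" using l[of e] unital_algebra_unit_right[OF assms(1)] by simp
  then have "r = (\<lambda>a. M a (r e))" using r by auto
  moreover have "l = M (r e)" using l by auto
  ultimately show ?thesis using w unfolding iota_def by simp
qed

lemma iota_inj:
  assumes "unital_algebra M e" "iota M x = iota M y"
  shows "x = y"
proof -
  have "M x e = M y e" using assms(2) unfolding iota_def by (metis prod.inject)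
  then show ?thesis using unital_algebra_unit_right[OF assms(1)] by simp
qed

lemma fst_iota [simp]: "fst (iota M x) = M x"
  and snd_iota [simp]: "snd (iota M x) = (\<lambda>y. M y x)"
  by (simp_all add: iota_def)

lemma mmul_iota: "kalgebra M \<Longrightarrow> mmul (iota M x) (iota M y) = iota M (M x y)"
  unfolding mmul_def iota_def by (auto intro!: ext simp: kalgebra_assoc)

lemma munit_iota: "unital_algebra M e \<Longrightarrow> munit = iota M e"
  unfolding munit_def iota_def
  by (auto intro!: ext simp: unital_algebra_unit_left unital_algebra_unit_right)

lemma madd_iota: "kbilinear M \<Longrightarrow> madd (iota M x) (iota M y) = iota M (x + y)"
  unfolding madd_def iota_def
  by (auto intro!: ext simp: klinear_add[OF kbilinear_left] klinear_add[OF kbilinear_right])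

lemma msc_iota: "kbilinear M \<Longrightarrow> msc c (iota M x) = iota M (sc c x)"
  unfolding msc_def iota_def
  by (auto intro!: ext simp: klinear_sc[OF kbilinear_left] klinear_sc[OF kbilinear_right])

lemma mlext_iota:
  assumes "kbilinear M"
  shows "mlext (\<lambda>p. iota M (g p)) x = iota M (lext g x)"
proof -
  have "(\<Sum>p\<in>Poly_Mapping.keys x. sc (Poly_Mapping.lookup x p) (M (g p) y)) = M (lext g x) y"
    "(\<Sum>p\<in>Poly_Mapping.keys x. sc (Poly_Mapping.lookup x p) (M y (g p))) = M y (lext g x)" for y
    unfolding lext_def
    by (simp_all add: klinear_sum[OF kbilinear_left[OF assms]] klinear_sc[OF kbilinear_left[OF assms]]
        klinear_sum[OF kbilinear_right[OF assms]] klinear_sc[OF kbilinear_right[OF assms]])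
  then show ?thesis unfolding mlext_def iota_def by (auto intro!: ext)
qed

lemma kspan_superset: "s \<in> S \<Longrightarrow> s \<in> kspan S"
  unfolding kspan_def by (rule CollectI, rule exI[of _ "{s}"], rule exI[of _ "\<lambda>_. 1"]) auto

lemma kspan_zero: "0 \<in> kspan S"
  unfolding kspan_def by (rule CollectI, rule exI[of _ "{}"]) auto

lemma kspan_sc:
  fixes S :: "('a \<Rightarrow>\<^sub>0 'k::field) set"
  shows "x \<in> kspan S \<Longrightarrow> sc c x \<in> kspan S"
  unfolding kspan_def
proof safe
  fix F and d :: "('a \<Rightarrow>\<^sub>0 'k::field) \<Rightarrow> 'k" assume "finite F" "F \<subseteq> S"
  then show "\<exists>F' c'. finite F' \<and> F' \<subseteq> S \<and> sc c (\<Sum>s\<in>F. sc (d s) s) = (\<Sum>s\<in>F'. sc (c' s) s)"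
    by (intro exI[of _ F] exI[of _ "\<lambda>s. c * d s"]) (simp add: sc_sum sc_sc)
qed

lemma kspan_add:
  fixes S :: "('a \<Rightarrow>\<^sub>0 'k::field) set"
  shows "x \<in> kspan S \<Longrightarrow> y \<in> kspan S \<Longrightarrow> x + y \<in> kspan S"
  unfolding kspan_def
proof safe
  fix F F' and d d' :: "('a \<Rightarrow>\<^sub>0 'k::field) \<Rightarrow> 'k"
  assume f: "finite F" "F \<subseteq> S" "finite F'" "F' \<subseteq> S"
  let ?c = "\<lambda>s. (if s \<in> F then d s else 0) + (if s \<in> F' then d' s else 0)"
  have "(\<Sum>s\<in>F. sc (d s) s) = (\<Sum>s\<in>F \<union> F'. sc (if s \<in> F then d s else 0) s)"
    "(\<Sum>s\<in>F'. sc (d' s) s) = (\<Sum>s\<in>F \<union> F'. sc (if s \<in> F' then d' s else 0) s)"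
    using f by (intro sum.mono_neutral_cong_left; auto)+
  then show "\<exists>G c. finite G \<and> G \<subseteq> S \<and> (\<Sum>s\<in>F. sc (d s) s) + (\<Sum>s\<in>F'. sc (d' s) s) = (\<Sum>s\<in>G. sc (c s) s)"
    using f by (intro exI[of _ "F \<union> F'"] exI[of _ ?c]) (simp add: sum.distrib[symmetric] sc_add_left)
qed

lemma kspan_sum: "finite F \<Longrightarrow> (\<And>s. s \<in> F \<Longrightarrow> f s \<in> kspan S) \<Longrightarrow> sum f F \<in> kspan S"
  by (induct F rule: finite_induct) (auto intro: kspan_add kspan_zero)

lemma kspan_mono: "S \<subseteq> kspan T \<Longrightarrow> kspan S \<subseteq> kspan T"
  unfolding kspan_def[of S] by (auto intro!: kspan_sum kspan_sc)

lemma kspan_eqI: "S \<subseteq> kspan T \<Longrightarrow> T \<subseteq> kspan S \<Longrightarrow> kspan S = kspan T"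
  using kspan_mono by blast

lemma klinear_fixes_kspan:
  assumes "klinear f" "x \<in> kspan S" "\<And>s. s \<in> S \<Longrightarrow> f s = s"
  shows "f x = x"
proof -
  obtain F c where "finite F" "F \<subseteq> S" "x = (\<Sum>s\<in>F. sc (c s) s)"
    using assms(2) unfolding kspan_def by auto
  then show ?thesis
    using assms(3) by (auto simp: klinear_sum[OF assms(1)] klinear_sc[OF assms(1)] intro!: sum.cong)
qed

lemma klinear_image_in_kspan_tens:
  assumes "klinear f"
  shows "f Z \<in> kspan {f (tens b b') | b b'. True}"
proof -
  have "f Z = f (\<Sum>p\<in>Poly_Mapping.keys Z. sc (Poly_Mapping.lookup Z p) (bv p))"
    by (subst poly_mapping_sum_bv[of Z]) simp
  also have "\<dots> = (\<Sum>p\<in>Poly_Mapping.keys Z. sc (Poly_Mapping.lookup Z p) (f (tens (bv (fst p)) (bv (snd p)))))"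
    by (simp add: klinear_sum[OF assms] klinear_sc[OF assms] bv_pair[symmetric])
  also have "\<dots> \<in> kspan {f (tens b b') | b b'. True}"
    by (intro kspan_sum kspan_sc kspan_superset) auto
  finally show ?thesis .
qed

locale unital =
  fixes m :: "('b \<Rightarrow>\<^sub>0 'k::field) \<Rightarrow> ('b \<Rightarrow>\<^sub>0 'k) \<Rightarrow> ('b \<Rightarrow>\<^sub>0 'k)" and u :: "'b \<Rightarrow>\<^sub>0 'k"
  assumes unital: "unital_algebra m u"
begin

abbreviation "M2 \<equiv> tmult m m"
abbreviation "M3 \<equiv> tmult m M2"
abbreviation "M2l \<equiv> tmult M2 m"
abbreviation "u2 \<equiv> tens u u"
abbreviation "u3 \<equiv> tens u u2"

lemma algebra: "kalgebra m"
  and bilinear: "kbilinear m"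
  and unit_left [simp]: "m u a = a"
  and unit_right [simp]: "m a u = a"
  using unital by (simp_all add: unital_algebra_algebra unital_algebra_bilinear
      unital_algebra_unit_left unital_algebra_unit_right)

lemma klinear_mult_right [simp]: "klinear (m a)"
  and klinear_mult_left [simp]: "klinear (\<lambda>x. m x b)"
  using bilinear by (auto intro: kbilinear_right kbilinear_left)

lemma unital_M2: "unital_algebra M2 u2" by (rule unital_algebra_tmult[OF unital unital])
lemma unital_M3: "unital_algebra M3 u3" by (rule unital_algebra_tmult[OF unital unital_M2])
lemma unital_M2l: "unital_algebra M2l (tens u2 u)" by (rule unital_algebra_tmult[OF unital_M2 unital])
lemma algebra_M2: "kalgebra M2"
  and algebra_M3: "kalgebra M3"
  and algebra_M2l: "kalgebra M2l"
  using unital_M2 unital_M3 unital_M2l by (auto intro: unital_algebra_algebra)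

lemma M2_tens [simp]: "M2 (tens a b) (tens c d) = tens (m a c) (m b d)"
  by (rule tmult_tens[OF bilinear bilinear])
lemma M3_tens [simp]: "M3 (tens a Y) (tens c Z) = tens (m a c) (M2 Y Z)"
  by (rule tmult_tens[OF bilinear kbilinear_tmult])
lemma M2l_tens [simp]: "M2l (tens Y a) (tens Z c) = tens (M2 Y Z) (m a c)"
  by (rule tmult_tens[OF kbilinear_tmult bilinear])

lemma M2_assoc: "M2 (M2 x y) z = M2 x (M2 y z)" by (rule kalgebra_assoc[OF algebra_M2])
lemma M3_assoc: "M3 (M3 x y) z = M3 x (M3 y z)" by (rule kalgebra_assoc[OF algebra_M3])
lemma assoc: "m (m x y) z = m x (m y z)" by (rule kalgebra_assoc[OF algebra])

lemma M2_unit [simp]: "M2 u2 x = x" "M2 x u2 = x"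
  using unital_M2 by (simp_all add: unital_algebra_unit_left unital_algebra_unit_right)

lemma M3_unit [simp]: "M3 u3 x = x" "M3 x u3 = x"
  using unital_M3 by (simp_all add: unital_algebra_unit_left unital_algebra_unit_right)

lemma assocr_M2l: "assocr (M2l x y) = M3 (assocr x) (assocr y)"
  by (rule assocr_tmult[OF bilinear bilinear bilinear])

lemma M3_tens_left_eq_tmap: "M3 (tens a Y) = tmap (m a) (M2 Y)"
  by (rule ext, rule klinear_tens_ext) (intro klinear_comp_intros | simp add: tmap_tens)+

lemma M3_tens_right_eq_tmap: "(\<lambda>z. M3 z (tens a Y)) = tmap (\<lambda>y. m y a) (\<lambda>z. M2 z Y)"
  by (rule ext, rule klinear_tens_ext[where f="\<lambda>z. M3 z (tens a Y)"]) (intro klinear_comp_intros | simp add: tmap_tens)+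

lemma M3_assocr_tens_left: "M3 (assocr (tens Y a)) (tens x (tens y z)) = assocr (tens (M2 Y (tens x y)) (m a z))"
  by (rule klinear_tens_ext[where f="\<lambda>Y. M3 (assocr (tens Y a)) (tens x (tens y z))"])
     (intro klinear_comp_intros | simp add: assocr_tens)+

lemma M3_assocr_left_eq: "M3 (assocr (tens Y a)) = assocr \<circ> tmap (M2 Y) (m a) \<circ> assocl"
  by (rule ext, rule klinear_tens3_ext[where f="M3 (assocr (tens Y a))"])
     (intro klinear_comp_intros klinear_comp | simp add: M3_assocr_tens_left assocl_tens tmap_tens)+

lemma M3_assocr_tens_right: "M3 (tens x (tens y z)) (assocr (tens Y a)) = assocr (tens (M2 (tens x y) Y) (m z a))"
  by (rule klinear_tens_ext[where f="\<lambda>Y. M3 (tens x (tens y z)) (assocr (tens Y a))"])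
     (intro klinear_comp_intros | simp add: assocr_tens)+

lemma M3_assocr_right_eq: "(\<lambda>w. M3 w (assocr (tens Y a))) = assocr \<circ> tmap (\<lambda>z. M2 z Y) (\<lambda>y. m y a) \<circ> assocl"
  by (rule ext, rule klinear_tens3_ext[where f="\<lambda>w. M3 w (assocr (tens Y a))"])
     (intro klinear_comp_intros klinear_comp | simp add: M3_assocr_tens_right assocl_tens tmap_tens)+

lemma mult_unit_eq_id [simp]: "m u = id" "(\<lambda>y. m y u) = id"
  by auto

lemma iota_comp_cancel:
  assumes "iota M2 \<circ> \<Delta> = iota M2 \<circ> \<Delta>'"
  shows "\<Delta> = \<Delta>'"
proof
  show "\<Delta> a = \<Delta>' a" for a
    by (rule iota_inj[OF unital_M2]) (use fun_cong[OF assms, of a] in simp)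
qed

lemma one_tens_iota: "one_tens m b = iota M2 (tens u b)"
proof -
  have "M2 (tens u b) = tmap id (m b)"
    by (rule ext, rule klinear_tens_ext) (intro klinear_comp_intros | simp add: tmap_tens)+
  moreover have "(\<lambda>y. M2 y (tens u b)) = tmap id (\<lambda>y. m y b)"
    by (rule ext, rule klinear_tens_ext[where f="\<lambda>y. M2 y (tens u b)"]) (intro klinear_comp_intros | simp add: tmap_tens)+
  ultimately show ?thesis unfolding one_tens_def iota_def by simp
qed

lemma tens_one_iota: "tens_one m a = iota M2 (tens a u)"
proof -
  have "M2 (tens a u) = tmap (m a) id"
    by (rule ext, rule klinear_tens_ext) (intro klinear_comp_intros | simp add: tmap_tens)+
  moreover have "(\<lambda>y. M2 y (tens a u)) = tmap (\<lambda>y. m y a) id"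
    by (rule ext, rule klinear_tens_ext[where f="\<lambda>y. M2 y (tens a u)"]) (intro klinear_comp_intros | simp add: tmap_tens)+
  ultimately show ?thesis unfolding tens_one_def iota_def by simp
qed

lemma one_tens_E_iota: "one_tens_E (iota M2 e) = iota M3 (tens u e)"
  unfolding one_tens_E_def iota_def using M3_tens_left_eq_tmap[of u e] M3_tens_right_eq_tmap[of u e] by (simp add: id_def)

lemma E_tens_one_iota: "E_tens_one (iota M2 e) = iota M3 (assocr (tens e u))"
  unfolding E_tens_one_def iota_def using M3_assocr_left_eq[of e u] M3_assocr_right_eq[of e u] by (simp add: id_def)

lemma klinear_comp_mult_right: "klinear g \<Longrightarrow> klinear (\<lambda>x. m a (g x))"
  by (rule klinear_compose[OF klinear_mult_right])
lemma klinear_comp_mult_left: "klinear g \<Longrightarrow> klinear (\<lambda>x. m (g x) b)"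
  by (rule klinear_compose[OF klinear_mult_left])

lemmas klinear_intros = klinear_comp_intros klinear_comp_mult_right klinear_comp_mult_left

lemma mult_sc_left [simp]: "m (sc c x) y = sc c (m x y)"
  and mult_sc_right [simp]: "m x (sc c y) = sc c (m x y)"
  using klinear_sc[OF klinear_mult_left] klinear_sc[OF klinear_mult_right] by blast+

context
  fixes \<epsilon> :: "('b \<Rightarrow>\<^sub>0 'k) \<Rightarrow> 'k"
  assumes fe: "kfunctional \<epsilon>"
begin

lemmas [simp] = kfunctional_sc[OF fe] eps_id_tens[OF fe] id_eps_tens[OF fe] eps_eps_tens[OF fe]

lemma eps_id_mult_one_tens: "eps_id \<epsilon> (M2 X (tens u c)) = m (eps_id \<epsilon> X) c"
  by (rule klinear_tens_ext[where f="\<lambda>X. eps_id \<epsilon> (M2 X (tens u c))" and g="\<lambda>X. m (eps_id \<epsilon> X) c"])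
     (intro klinear_intros | simp)+

lemma eps_id_one_tens_mult: "eps_id \<epsilon> (M2 (tens u a) X) = m a (eps_id \<epsilon> X)"
  by (rule klinear_tens_ext[where f="\<lambda>X. eps_id \<epsilon> (M2 (tens u a) X)" and g="\<lambda>X. m a (eps_id \<epsilon> X)"])
     (intro klinear_intros | simp)+

lemma id_eps_tens_one_mult: "id_eps \<epsilon> (M2 (tens a u) X) = m a (id_eps \<epsilon> X)"
  by (rule klinear_tens_ext[where f="\<lambda>X. id_eps \<epsilon> (M2 (tens a u) X)" and g="\<lambda>X. m a (id_eps \<epsilon> X)"])
     (intro klinear_intros | simp)+

lemma id_eps_mult_tens_one: "id_eps \<epsilon> (M2 X (tens c u)) = m (id_eps \<epsilon> X) c"
  by (rule klinear_tens_ext[where f="\<lambda>X. id_eps \<epsilon> (M2 X (tens c u))" and g="\<lambda>X. m (id_eps \<epsilon> X) c"])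
     (intro klinear_intros | simp)+

lemma eps_eps_eq_eps_id: "eps_eps \<epsilon> X = \<epsilon> (eps_id \<epsilon> X)"
  by (rule kfunctional_tens_ext[where f="eps_eps \<epsilon>" and g="\<lambda>X. \<epsilon> (eps_id \<epsilon> X)"])
     (simp_all add: kfunctional_compose[OF fe klinear_eps_id])

lemma eps_eps_eq_id_eps: "eps_eps \<epsilon> X = \<epsilon> (id_eps \<epsilon> X)"
  by (rule kfunctional_tens_ext[where f="eps_eps \<epsilon>" and g="\<lambda>X. \<epsilon> (id_eps \<epsilon> X)"])
     (simp_all add: kfunctional_compose[OF fe klinear_id_eps] mult.commute)

lemma eps_id_tmap_id: "klinear f \<Longrightarrow> f (eps_id \<epsilon> X) = eps_id \<epsilon> (tmap id f X)"
  by (rule klinear_tens_ext[where f="\<lambda>X. f (eps_id \<epsilon> X)" and g="\<lambda>X. eps_id \<epsilon> (tmap id f X)"])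
     (rule klinear_compose[OF _ klinear_eps_id], assumption, intro klinear_intros, simp add: tmap_tens klinear_sc)

lemma eps_eps_sandwich_tw: "eps_eps \<epsilon> (M2 (M2 (tens x u) (tw Y)) (tens u b)) = \<epsilon> (m x (eps_id \<epsilon> (M2 Y (tens b u))))"
  by (rule kfunctional_tens_ext[where f="\<lambda>Y. eps_eps \<epsilon> (M2 (M2 (tens x u) (tw Y)) (tens u b))"
                      and g="\<lambda>Y. \<epsilon> (m x (eps_id \<epsilon> (M2 Y (tens b u))))"])
     (intro kfunctional_comp_eps_eps kfunctional_compose[OF fe] klinear_intros | simp add: tw_tens mult.commute)+

lemma eps_eps_sandwich: "eps_eps \<epsilon> (M2 (M2 (tens a u) Y) (tens u z)) = \<epsilon> (m (eps_id \<epsilon> (M2 (tens a u) Y)) z)"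
  by (rule kfunctional_tens_ext[where f="\<lambda>Y. eps_eps \<epsilon> (M2 (M2 (tens a u) Y) (tens u z))"
                      and g="\<lambda>Y. \<epsilon> (m (eps_id \<epsilon> (M2 (tens a u) Y)) z)"])
     (intro kfunctional_comp_eps_eps kfunctional_compose[OF fe] klinear_intros | simp)+

end

lemma tmap_id_mult_tens_one: "klinear f \<Longrightarrow> tmap id f (M2 X (tens b u)) = M2 (tmap id f X) (tens b u)"
  by (rule klinear_tens_ext[where f="\<lambda>X. tmap id f (M2 X (tens b u))" and g="\<lambda>X. M2 (tmap id f X) (tens b u)"])
     (intro klinear_intros | simp add: tmap_tens)+

lemma tmap_id_tens_one_mult: "klinear f \<Longrightarrow> tmap id f (M2 (tens a u) X) = M2 (tens a u) (tmap id f X)"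
  by (rule klinear_tens_ext[where f="\<lambda>X. tmap id f (M2 (tens a u) X)" and g="\<lambda>X. M2 (tens a u) (tmap id f X)"])
     (intro klinear_intros | simp add: tmap_tens)+

lemma tmap_id_mult_left_eq: "tmap id (m a) X = M2 (tens u a) X"
  by (rule klinear_tens_ext[where f="tmap id (m a)" and g="M2 (tens u a)"]) (intro klinear_intros | simp add: tmap_tens)+

lemma tmap_id_mult_right_eq: "tmap id (\<lambda>y. m y c) X = M2 X (tens u c)"
  by (rule klinear_tens_ext[where f="tmap id (\<lambda>y. m y c)" and g="\<lambda>X. M2 X (tens u c)"]) (intro klinear_intros | simp add: tmap_tens)+

lemma M3_one_tens_assocr_tens_one: "M3 (tens u Y) (assocr (tens X u)) = tmap id (\<lambda>z. M2 Y (tens z u)) X"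
  by (rule klinear_tens_ext[where f="\<lambda>X. M3 (tens u Y) (assocr (tens X u))" and g="tmap id (\<lambda>z. M2 Y (tens z u))"])
     (intro klinear_intros | simp add: tmap_tens[OF klinear_id klinear_comp_tmult_right[OF klinear_comp_tens_left[OF klinear_ident]]] assocr_tens)+

lemma M3_assocr_tens_one_one_tens: "M3 (assocr (tens X u)) (tens u Y) = tmap id (\<lambda>z. M2 (tens z u) Y) X"
  by (rule klinear_tens_ext[where f="\<lambda>X. M3 (assocr (tens X u)) (tens u Y)" and g="tmap id (\<lambda>z. M2 (tens z u) Y)"])
     (intro klinear_intros | simp add: tmap_tens[OF klinear_id klinear_comp_tmult_left[OF klinear_comp_tens_left[OF klinear_ident]]] assocr_tens)+

end


locale comultiplication = unital m u
  for m :: "('b \<Rightarrow>\<^sub>0 'k::field) \<Rightarrow> ('b \<Rightarrow>\<^sub>0 'k) \<Rightarrow> ('b \<Rightarrow>\<^sub>0 'k)" and u +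
  fixes \<Delta> :: "('b \<Rightarrow>\<^sub>0 'k) \<Rightarrow> ('b \<times> 'b \<Rightarrow>\<^sub>0 'k)"
  assumes klinear_Delta: "klinear \<Delta>"
    and Delta_mult: "\<And>a b. \<Delta> (m a b) = M2 (\<Delta> a) (\<Delta> b)"
begin

abbreviation "D \<equiv> iota M2 \<circ> \<Delta>"
abbreviation "\<Delta>\<^sub>1 \<equiv> \<Delta> u"

lemma klinear_comp_Delta: "klinear g \<Longrightarrow> klinear (\<lambda>x. \<Delta> (g x))"
  by (rule klinear_compose[OF klinear_Delta])

lemmas klinear_Delta_intros = klinear_intros klinear_comp_Delta

lemma Delta_unit_mult [simp]: "M2 \<Delta>\<^sub>1 (\<Delta> a) = \<Delta> a"
  and mult_Delta_unit [simp]: "M2 (\<Delta> a) \<Delta>\<^sub>1 = \<Delta> a"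
  using Delta_mult[of u a] Delta_mult[of a u] by simp_all

lemma algebra_hom_id: "algebra_hom id m m"
  and algebra_hom_Delta: "algebra_hom \<Delta> m M2"
  unfolding algebra_hom_def using klinear_Delta Delta_mult by simp_all

lemma tmap_id_Delta_mult: "tmap id \<Delta> (M2 x y) = M3 (tmap id \<Delta> x) (tmap id \<Delta> y)"
  by (rule tmap_tmult[OF algebra_hom_id algebra_hom_Delta bilinear bilinear bilinear kbilinear_tmult])

lemma tmap_Delta_id_mult: "tmap \<Delta> id (M2 x y) = M2l (tmap \<Delta> id x) (tmap \<Delta> id y)"
  by (rule tmap_tmult[OF algebra_hom_Delta algebra_hom_id bilinear bilinear kbilinear_tmult bilinear])

lemma tmap_id_Delta_tens [simp]: "tmap id \<Delta> (tens a b) = tens a (\<Delta> b)"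
  and tmap_Delta_id_tens [simp]: "tmap \<Delta> id (tens a b) = tens (\<Delta> a) b"
  by (simp_all add: tmap_tens klinear_Delta)

lemma the_iota_eq: "(THE t. iota M2 t = iota M2 x) = x"
  by (rule the_equality) (auto dest: iota_inj[OF unital_M2])

lemma klinear_T1 [simp]: "klinear (T1 m D)"
  and klinear_T2 [simp]: "klinear (T2 m D)"
  unfolding T1_def T2_def by simp_all

lemma T1_tens: "T1 m D (tens a b) = M2 (\<Delta> a) (tens u b)"
proof -
  have T1_eq: "T1 m D = lext (\<lambda>p. M2 (\<Delta> (bv (fst p))) (tens u (bv (snd p))))"
    unfolding T1_def
    by (rule arg_cong[where f=lext], rule ext) (simp add: one_tens_iota mmul_iota[OF algebra_M2] the_iota_eq)
  show ?thesis
    unfolding T1_eq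
    by (rule bilinear_basis_ext[where F="\<lambda>a b. lext (\<lambda>p. M2 (\<Delta> (bv (fst p))) (tens u (bv (snd p)))) (tens a b)"])
       (intro klinear_Delta_intros klinear_tens_arg1 klinear_tens_arg2 klinear_lext | simp add: tens_bv)+
qed

lemma T2_tens: "T2 m D (tens a b) = M2 (tens a u) (\<Delta> b)"
proof -
  have T2_eq: "T2 m D = lext (\<lambda>p. M2 (tens (bv (fst p)) u) (\<Delta> (bv (snd p))))"
    unfolding T2_def
    by (rule arg_cong[where f=lext], rule ext) (simp add: tens_one_iota mmul_iota[OF algebra_M2] the_iota_eq)
  show ?thesis
    unfolding T2_eq
    by (rule bilinear_basis_ext[where F="\<lambda>a b. lext (\<lambda>p. M2 (tens (bv (fst p)) u) (\<Delta> (bv (snd p)))) (tens a b)"])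
       (intro klinear_Delta_intros klinear_tens_arg1 klinear_tens_arg2 klinear_lext | simp add: tens_bv)+
qed

lemma id_Delta_eq: "id_Delta m D x = iota M3 (tmap id \<Delta> x)"
proof -
  have "id_Delta m D x = mlext (\<lambda>p. iota M3 (tens (bv (fst p)) (\<Delta> (bv (snd p))))) x"
    unfolding id_Delta_def iota_def using M3_tens_left_eq_tmap M3_tens_right_eq_tmap by simp
  also have "\<dots> = iota M3 (lext (\<lambda>p. tens (bv (fst p)) (\<Delta> (bv (snd p)))) x)"
    by (rule mlext_iota[OF kbilinear_tmult])
  also have "lext (\<lambda>p. tens (bv (fst p)) (\<Delta> (bv (snd p)))) = tmap id \<Delta>"
    unfolding tmap_def by simp
  finally show ?thesis .
qed

lemma Delta_id_eq: "Delta_id m D x = iota M3 (assocr (tmap \<Delta> id x))"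
proof -
  have "Delta_id m D x = mlext (\<lambda>p. iota M3 (assocr (tens (\<Delta> (bv (fst p))) (bv (snd p))))) x"
    unfolding Delta_id_def iota_def using M3_assocr_left_eq M3_assocr_right_eq by simp
  also have "\<dots> = iota M3 (lext (\<lambda>p. assocr (tens (\<Delta> (bv (fst p))) (bv (snd p)))) x)"
    by (rule mlext_iota[OF kbilinear_tmult])
  also have "lext (\<lambda>p. assocr (tens (\<Delta> (bv (fst p))) (bv (snd p)))) x = assocr (tmap \<Delta> id x)"
    by (rule klinear_basis_ext[where f="lext _"]) (intro klinear_Delta_intros klinear_lext | simp add: tmap_def)+
  finally show ?thesis .
qed

definition coassociative :: bool where
  "coassociative \<longleftrightarrow> (\<forall>a. assocr (tmap \<Delta> id (\<Delta> a)) = tmap id \<Delta> (\<Delta> a))"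

subsection \<open>Axiom (ii) and coassociativity\<close>

definition T2_after_T1 where
  "T2_after_T1 x = (assocr \<circ> tmap (T2 m D) id \<circ> assocl) (tmap id (T1 m D) x)"

definition T1_after_T2 where
  "T1_after_T2 x = tmap id (T1 m D) ((assocr \<circ> tmap (T2 m D) id \<circ> assocl) x)"

lemma T2_id_assocl_tens:
  "assocr (tmap (T2 m D) id (assocl (tens a W))) = M3 (tens a u2) (assocr (tmap \<Delta> id W))"
proof (rule klinear_tens_ext[where f="\<lambda>W. assocr (tmap (T2 m D) id (assocl (tens a W)))"])
  fix s t
  have "assocr (tens (M2 (tens a u) (\<Delta> s)) t) = assocr (M2l (tens (tens a u) u) (tens (\<Delta> s) t))"
    by simp
  also have "\<dots> = M3 (tens a u2) (assocr (tens (\<Delta> s) t))"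
    by (simp only: assocr_M2l assocr_tens)
  finally show "assocr (tmap (T2 m D) id (assocl (tens a (tens s t)))) =
      M3 (tens a u2) (assocr (tmap \<Delta> id (tens s t)))"
    by (simp add: assocl_tens tmap_tens T2_tens)
qed (intro klinear_Delta_intros | simp)+

lemma id_T1_assocr_tens: "tmap id (T1 m D) (assocr (tens Z c)) = M3 (tmap id \<Delta> Z) (tens u (tens u c))"
  by (rule klinear_tens_ext[where f="\<lambda>Z. tmap id (T1 m D) (assocr (tens Z c))"
        and g="\<lambda>Z. M3 (tmap id \<Delta> Z) (tens u (tens u c))"])
     (intro klinear_Delta_intros | simp add: assocr_tens tmap_tens T1_tens)+

lemma T2_after_T1_tens:
  "T2_after_T1 (tens a (tens b c)) = M3 (tens a u2) (M3 (assocr (tmap \<Delta> id (\<Delta> b))) (tens u (tens u c)))"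
proof -
  have unit: "tens \<Delta>\<^sub>1 c = M2l (tmap \<Delta> id u2) (tens u2 c)"
    by simp
  have "tmap \<Delta> id (M2 (\<Delta> b) (tens u c)) = M2l (tmap \<Delta> id (\<Delta> b)) (tens \<Delta>\<^sub>1 c)"
    by (simp add: tmap_Delta_id_mult)
  also have "\<dots> = M2l (tmap \<Delta> id (M2 (\<Delta> b) u2)) (tens u2 c)"
    unfolding unit tmap_Delta_id_mult by (simp add: kalgebra_assoc[OF algebra_M2l])
  finally have "tmap \<Delta> id (M2 (\<Delta> b) (tens u c)) = M2l (tmap \<Delta> id (\<Delta> b)) (tens u2 c)"
    by simp
  then show ?thesis
    unfolding T2_after_T1_def by (simp add: tmap_tens T1_tens T2_id_assocl_tens assocr_M2l assocr_tens)
qed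

lemma T1_after_T2_tens:
  "T1_after_T2 (tens a (tens b c)) = M3 (tens a u2) (M3 (tmap id \<Delta> (\<Delta> b)) (tens u (tens u c)))"
proof -
  have unit: "tens a \<Delta>\<^sub>1 = M3 (tens a u2) (tmap id \<Delta> u2)"
    by simp
  have "tmap id \<Delta> (M2 (tens a u) (\<Delta> b)) = M3 (tens a \<Delta>\<^sub>1) (tmap id \<Delta> (\<Delta> b))"
    by (simp add: tmap_id_Delta_mult)
  also have "\<dots> = M3 (tens a u2) (tmap id \<Delta> (M2 u2 (\<Delta> b)))"
    unfolding unit tmap_id_Delta_mult by (simp add: M3_assoc[symmetric])
  finally have "tmap id \<Delta> (M2 (tens a u) (\<Delta> b)) = M3 (tens a u2) (tmap id \<Delta> (\<Delta> b))"
    by simp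
  then show ?thesis
    unfolding T1_after_T2_def by (simp add: assocl_tens tmap_tens T2_tens id_T1_assocr_tens M3_assoc)
qed

lemma T_commute_iff_coassociative: "(\<forall>x. T2_after_T1 x = T1_after_T2 x) \<longleftrightarrow> coassociative"
proof
  assume "\<forall>x. T2_after_T1 x = T1_after_T2 x"
  then show coassociative
    unfolding coassociative_def
    using T2_after_T1_tens[of u _ u] T1_after_T2_tens[of u _ u] by simp
next
  have "klinear T2_after_T1" "klinear T1_after_T2"
    unfolding T2_after_T1_def[abs_def] T1_after_T2_def[abs_def] comp_def
    by (intro klinear_Delta_intros klinear_T1 klinear_T2)+
  moreover assume coassociative
  ultimately show "\<forall>x. T2_after_T1 x = T1_after_T2 x"
    by (auto intro: klinear_tens3_ext simp: T2_after_T1_tens T1_after_T2_tens coassociative_def)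
qed

subsection \<open>Axiom (iii) and counitality\<close>

lemma T_counit_iff_counit:
  assumes fe: "kfunctional \<epsilon>"
  shows "(\<forall>x. eps_id \<epsilon> (T1 m D x) = mu m x \<and> id_eps \<epsilon> (T2 m D x) = mu m x) \<longleftrightarrow>
    (\<forall>a. eps_id \<epsilon> (\<Delta> a) = a \<and> id_eps \<epsilon> (\<Delta> a) = a)"
proof
  assume T: "\<forall>x. eps_id \<epsilon> (T1 m D x) = mu m x \<and> id_eps \<epsilon> (T2 m D x) = mu m x"
  show "\<forall>a. eps_id \<epsilon> (\<Delta> a) = a \<and> id_eps \<epsilon> (\<Delta> a) = a"
  proof
    fix a
    show "eps_id \<epsilon> (\<Delta> a) = a \<and> id_eps \<epsilon> (\<Delta> a) = a"
      using T[rule_format, of "tens a u"] T[rule_format, of "tens u a"]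
      by (simp add: T1_tens T2_tens mu_tens[OF bilinear])
  qed
next
  assume counit: "\<forall>a. eps_id \<epsilon> (\<Delta> a) = a \<and> id_eps \<epsilon> (\<Delta> a) = a"
  show "\<forall>x. eps_id \<epsilon> (T1 m D x) = mu m x \<and> id_eps \<epsilon> (T2 m D x) = mu m x"
  proof (intro allI conjI)
    show "eps_id \<epsilon> (T1 m D x) = mu m x" for x
      by (rule klinear_tens_ext[where f="\<lambda>x. eps_id \<epsilon> (T1 m D x)" and g="mu m"])
         (intro klinear_Delta_intros klinear_T1 klinear_mu
          | simp add: T1_tens eps_id_mult_one_tens[OF fe] counit mu_tens[OF bilinear])+
    show "id_eps \<epsilon> (T2 m D x) = mu m x" for x
      by (rule klinear_tens_ext[where f="\<lambda>x. id_eps \<epsilon> (T2 m D x)" and g="mu m"])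
         (intro klinear_Delta_intros klinear_T2 klinear_mu
          | simp add: T2_tens id_eps_tens_one_mult[OF fe] counit mu_tens[OF bilinear])+
  qed
qed

subsection \<open>Axiom (iv): the idempotent is \<open>\<Delta>(1)\<close>\<close>

lemma kspan_Delta_mult_tens: "kspan {M2 (\<Delta> a) (tens b b') | a b b'. True} = kspan {M2 \<Delta>\<^sub>1 (tens b b') | b b'. True}"
proof (rule kspan_eqI)
  show "{M2 (\<Delta> a) (tens b b') | a b b'. True} \<subseteq> kspan {M2 \<Delta>\<^sub>1 (tens b b') | b b'. True}"
  proof safe
    fix a b b'
    have "M2 (\<Delta> a) (tens b b') = M2 \<Delta>\<^sub>1 (M2 (\<Delta> a) (tens b b'))"
      by (simp add: M2_assoc[symmetric])
    then show "M2 (\<Delta> a) (tens b b') \<in> kspan {M2 \<Delta>\<^sub>1 (tens b b') | b b'. True}"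
      using klinear_image_in_kspan_tens[of "M2 \<Delta>\<^sub>1" "M2 (\<Delta> a) (tens b b')"] by simp
  qed
  show "{M2 \<Delta>\<^sub>1 (tens b b') | b b'. True} \<subseteq> kspan {M2 (\<Delta> a) (tens b b') | a b b'. True}"
    by (auto intro!: kspan_superset)
qed

lemma kspan_tens_mult_Delta: "kspan {M2 (tens b b') (\<Delta> a) | a b b'. True} = kspan {M2 (tens b b') \<Delta>\<^sub>1 | b b'. True}"
proof (rule kspan_eqI)
  show "{M2 (tens b b') (\<Delta> a) | a b b'. True} \<subseteq> kspan {M2 (tens b b') \<Delta>\<^sub>1 | b b'. True}"
  proof safe
    fix a b b'
    have "M2 (tens b b') (\<Delta> a) = M2 (M2 (tens b b') (\<Delta> a)) \<Delta>\<^sub>1"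
      by (simp add: M2_assoc)
    then show "M2 (tens b b') (\<Delta> a) \<in> kspan {M2 (tens b b') \<Delta>\<^sub>1 | b b'. True}"
      using klinear_image_in_kspan_tens[of "\<lambda>y. M2 y \<Delta>\<^sub>1" "M2 (tens b b') (\<Delta> a)"] by simp
  qed
  show "{M2 (tens b b') \<Delta>\<^sub>1 | b b'. True} \<subseteq> kspan {M2 (tens b b') (\<Delta> a) | a b b'. True}"
    by (auto intro!: kspan_superset)
qed

text \<open>By (iv), \<open>e\<close> lies in the span of the \<open>\<Delta>(a)(b \<otimes> b')\<close>, on which left multiplication by
  \<open>\<Delta>(1)\<close> acts trivially, so \<open>\<Delta>(1) e = e\<close>; dually \<open>\<Delta>(1)\<close> lies in the span of the
  \<open>(b \<otimes> b') e\<close>, so \<open>\<Delta>(1) e = \<Delta>(1)\<close>.\<close>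

lemma idempotent_multiplier_eq_Delta_unit:
  assumes E: "E \<in> multipliers M2" "mmul E E = E"
    and fst_span: "kspan {fst (D a) (tens b b') | a b b'. True} = kspan {fst E (tens b b') | b b'. True}"
    and snd_span: "kspan {snd (D a) (tens b b') | a b b'. True} = kspan {snd E (tens b b') | b b'. True}"
  shows "E = iota M2 \<Delta>\<^sub>1"
proof -
  define e where "e = snd E u2"
  have E_eq: "E = iota M2 e"
    unfolding e_def by (rule multipliers_iota[OF unital_M2 E(1)])
  have idem: "M2 e e = e"
    using E(2) unfolding E_eq mmul_iota[OF algebra_M2] by (rule iota_inj[OF unital_M2])
  have "e \<in> kspan {fst (D a) (tens b b') | a b b'. True}"
    unfolding fst_span by (rule kspan_superset) (rule CollectI, intro exI[of _ u], simp add: E_eq)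
  then have left: "M2 \<Delta>\<^sub>1 e = e"
    by (rule klinear_fixes_kspan[OF klinear_tmult_right]) (auto simp: M2_assoc[symmetric])
  have "\<Delta>\<^sub>1 \<in> kspan {snd (D a) (tens b b') | a b b'. True}"
    by (rule kspan_superset) (rule CollectI, intro exI[of _ u] exI[of _ u], simp)
  then have right: "M2 \<Delta>\<^sub>1 e = \<Delta>\<^sub>1"
    unfolding snd_span by (rule klinear_fixes_kspan[OF klinear_tmult_left])
      (auto simp: E_eq M2_assoc idem)
  show ?thesis using E_eq left right by simp
qed

subsection \<open>Axiom (v) and the multiplicativity of \<open>\<Delta>(1)\<close>\<close>

definition id_Delta_ext :: "('b \<times> 'b, 'k) mult \<Rightarrow> ('b \<times> 'b \<times> 'b, 'k) mult" where
  "id_Delta_ext w = iota M3 (tmap id \<Delta> (snd w u2))"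

definition Delta_id_ext :: "('b \<times> 'b, 'k) mult \<Rightarrow> ('b \<times> 'b \<times> 'b, 'k) mult" where
  "Delta_id_ext w = iota M3 (assocr (tmap \<Delta> id (snd w u2)))"

lemma mmul_multipliers_M2:
  assumes "w \<in> multipliers M2" "w' \<in> multipliers M2"
  shows "mmul w w' = iota M2 (M2 (snd w u2) (snd w' u2))"
  by (subst multipliers_iota[OF unital_M2 assms(1)], subst multipliers_iota[OF unital_M2 assms(2)])
     (simp add: mmul_iota[OF algebra_M2])

lemma is_mult_ext_id_Delta: "is_mult_ext m id_Delta_ext (id_Delta m D) (one_tens_E (iota M2 \<Delta>\<^sub>1))"
  unfolding is_mult_ext_def id_Delta_ext_def
  by (simp add: iota_multipliers[OF algebra_M3] mmul_multipliers_M2 tmap_id_Delta_mult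
      mmul_iota[OF algebra_M3] id_Delta_eq munit_iota[OF unital_M2] one_tens_E_iota)

lemma is_mult_ext_Delta_id: "is_mult_ext m Delta_id_ext (Delta_id m D) (E_tens_one (iota M2 \<Delta>\<^sub>1))"
  unfolding is_mult_ext_def Delta_id_ext_def
  by (simp add: iota_multipliers[OF algebra_M3] mmul_multipliers_M2 tmap_Delta_id_mult assocr_M2l
      mmul_iota[OF algebra_M3] Delta_id_eq munit_iota[OF unital_M2] E_tens_one_iota)

lemma mult_ext_Delta_unit:
  assumes "is_mult_ext m \<Phi> (id_Delta m D) e" "is_mult_ext m \<Psi> (Delta_id m D) e'"
  shows "\<Phi> (iota M2 \<Delta>\<^sub>1) = iota M3 (tmap id \<Delta> \<Delta>\<^sub>1)"
    and "\<Psi> (iota M2 \<Delta>\<^sub>1) = iota M3 (assocr (tmap \<Delta> id \<Delta>\<^sub>1))"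
  using assms unfolding is_mult_ext_def by (simp_all add: id_Delta_eq Delta_id_eq)

lemma mult_ext_axiom_iff:
  assumes coassociative
  shows "((\<exists>\<Phi>. is_mult_ext m \<Phi> (id_Delta m D) (one_tens_E (iota M2 \<Delta>\<^sub>1))) \<and>
      (\<exists>\<Psi>. is_mult_ext m \<Psi> (Delta_id m D) (E_tens_one (iota M2 \<Delta>\<^sub>1))) \<and>
      (\<forall>\<Phi> \<Psi>. is_mult_ext m \<Phi> (id_Delta m D) (one_tens_E (iota M2 \<Delta>\<^sub>1)) \<longrightarrow>
         is_mult_ext m \<Psi> (Delta_id m D) (E_tens_one (iota M2 \<Delta>\<^sub>1)) \<longrightarrow>
         \<Phi> (iota M2 \<Delta>\<^sub>1) = \<Psi> (iota M2 \<Delta>\<^sub>1) \<and>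
         mmul (E_tens_one (iota M2 \<Delta>\<^sub>1)) (one_tens_E (iota M2 \<Delta>\<^sub>1)) = \<Phi> (iota M2 \<Delta>\<^sub>1) \<and>
         mmul (one_tens_E (iota M2 \<Delta>\<^sub>1)) (E_tens_one (iota M2 \<Delta>\<^sub>1)) = \<Phi> (iota M2 \<Delta>\<^sub>1)))
    \<longleftrightarrow> assocr (tmap \<Delta> id \<Delta>\<^sub>1) = M3 (assocr (tens \<Delta>\<^sub>1 u)) (tens u \<Delta>\<^sub>1) \<and>
        assocr (tmap \<Delta> id \<Delta>\<^sub>1) = M3 (tens u \<Delta>\<^sub>1) (assocr (tens \<Delta>\<^sub>1 u))"
    (is "?v \<longleftrightarrow> ?unit_mult")
proof -
  have coassoc_unit: "tmap id \<Delta> \<Delta>\<^sub>1 = assocr (tmap \<Delta> id \<Delta>\<^sub>1)"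
    using assms unfolding coassociative_def by simp
  have products: "mmul (E_tens_one (iota M2 \<Delta>\<^sub>1)) (one_tens_E (iota M2 \<Delta>\<^sub>1)) =
        iota M3 (M3 (assocr (tens \<Delta>\<^sub>1 u)) (tens u \<Delta>\<^sub>1))"
      "mmul (one_tens_E (iota M2 \<Delta>\<^sub>1)) (E_tens_one (iota M2 \<Delta>\<^sub>1)) =
        iota M3 (M3 (tens u \<Delta>\<^sub>1) (assocr (tens \<Delta>\<^sub>1 u)))"
    by (simp_all add: E_tens_one_iota one_tens_E_iota mmul_iota[OF algebra_M3])
  show ?thesis
  proof
    assume ?v
    then have "iota M3 (M3 (assocr (tens \<Delta>\<^sub>1 u)) (tens u \<Delta>\<^sub>1)) = iota M3 (assocr (tmap \<Delta> id \<Delta>\<^sub>1))"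
      "iota M3 (M3 (tens u \<Delta>\<^sub>1) (assocr (tens \<Delta>\<^sub>1 u))) = iota M3 (assocr (tmap \<Delta> id \<Delta>\<^sub>1))"
      using is_mult_ext_id_Delta is_mult_ext_Delta_id
        mult_ext_Delta_unit[OF is_mult_ext_id_Delta is_mult_ext_Delta_id]
      unfolding products coassoc_unit by metis+
    then show ?unit_mult
      by (auto dest: iota_inj[OF unital_M3])
  next
    assume ?unit_mult
    then show ?v
      using is_mult_ext_id_Delta is_mult_ext_Delta_id mult_ext_Delta_unit
      unfolding products coassoc_unit by metis
  qed
qed

subsection \<open>Axiom (vi) and the weak multiplicativity of the counit\<close>

text \<open>Writing \<open>\<Delta>(1) = 1\<^sub>1 \<otimes> 1\<^sub>2\<close>, these are the maps \<open>b \<mapsto> \<epsilon>(1\<^sub>1 b) 1\<^sub>2\<close> and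
  \<open>a \<mapsto> \<epsilon>(a 1\<^sub>1) 1\<^sub>2\<close> of weak bialgebra theory, there written \<open>\<Pi>\<^sup>L\<close> and \<open>\<Pi>\<^sup>L\<close> with an overline.\<close>

abbreviation PiL :: "(('b \<Rightarrow>\<^sub>0 'k) \<Rightarrow> 'k) \<Rightarrow> ('b \<Rightarrow>\<^sub>0 'k) \<Rightarrow> ('b \<Rightarrow>\<^sub>0 'k)" where
  "PiL \<epsilon> b \<equiv> eps_id \<epsilon> (M2 \<Delta>\<^sub>1 (tens b u))"

abbreviation PiL_bar :: "(('b \<Rightarrow>\<^sub>0 'k) \<Rightarrow> 'k) \<Rightarrow> ('b \<Rightarrow>\<^sub>0 'k) \<Rightarrow> ('b \<Rightarrow>\<^sub>0 'k)" where
  "PiL_bar \<epsilon> a \<equiv> eps_id \<epsilon> (M2 (tens a u) \<Delta>\<^sub>1)"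

context
  fixes \<epsilon> :: "('b \<Rightarrow>\<^sub>0 'k) \<Rightarrow> 'k"
  assumes fe: "kfunctional \<epsilon>"
begin

lemma eps_id_mult_tens_one_cong:
  assumes "\<And>x. \<epsilon> (m x b) = \<epsilon> (m x b')"
  shows "eps_id \<epsilon> (M2 X (tens b u)) = eps_id \<epsilon> (M2 X (tens b' u))"
  by (rule klinear_tens_ext[where f="\<lambda>X. eps_id \<epsilon> (M2 X (tens b u))" and g="\<lambda>X. eps_id \<epsilon> (M2 X (tens b' u))"])
     (intro klinear_Delta_intros | simp add: eps_id_tens[OF fe] assms)+

lemma eps_id_tens_one_mult_cong:
  assumes "\<And>z. \<epsilon> (m a z) = \<epsilon> (m a' z)"
  shows "eps_id \<epsilon> (M2 (tens a u) X) = eps_id \<epsilon> (M2 (tens a' u) X)"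
  by (rule klinear_tens_ext[where f="\<lambda>X. eps_id \<epsilon> (M2 (tens a u) X)" and g="\<lambda>X. eps_id \<epsilon> (M2 (tens a' u) X)"])
     (intro klinear_Delta_intros | simp add: eps_id_tens[OF fe] assms)+

text \<open>The unit axiom and coassociativity give \<open>(1 \<otimes> \<Delta>(1))(\<Delta>(1) \<otimes> 1) = (id \<otimes> \<Delta>)\<Delta>(1)\<close>;
  applying \<open>(\<epsilon> \<otimes> id)(\<Delta>(a) \<cdot>)\<close> to the last two legs, counitality collapses the inner comultiplication.\<close>

lemma tmap_id_eps_id_Delta_unit_left:
  assumes counit: "\<And>a. eps_id \<epsilon> (\<Delta> a) = a" and coassociative
    and unit: "assocr (tmap \<Delta> id \<Delta>\<^sub>1) = M3 (tens u \<Delta>\<^sub>1) (assocr (tens \<Delta>\<^sub>1 u))"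
  shows "tmap id (\<lambda>y. eps_id \<epsilon> (M2 (\<Delta> a) (tens y u))) \<Delta>\<^sub>1 = tmap id (m a) \<Delta>\<^sub>1"
proof -
  let ?K = "\<lambda>Y. eps_id \<epsilon> (M2 (\<Delta> a) Y)"
  have lK: "klinear ?K" by (intro klinear_Delta_intros)
  have "(\<lambda>y. eps_id \<epsilon> (M2 (\<Delta> a) (tens y u))) = (\<lambda>z. ?K (M2 \<Delta>\<^sub>1 (tens z u)))"
    by (simp add: M2_assoc[symmetric])
  moreover have "tmap id (\<lambda>z. ?K (M2 \<Delta>\<^sub>1 (tens z u))) \<Delta>\<^sub>1 = tmap id ?K (tmap id (\<lambda>z. M2 \<Delta>\<^sub>1 (tens z u)) \<Delta>\<^sub>1)"
    by (rule tmap_id_compose[symmetric, OF lK]) (intro klinear_Delta_intros)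
  moreover have "tmap id (\<lambda>z. M2 \<Delta>\<^sub>1 (tens z u)) \<Delta>\<^sub>1 = tmap id \<Delta> \<Delta>\<^sub>1"
    using M3_one_tens_assocr_tens_one[of \<Delta>\<^sub>1 \<Delta>\<^sub>1] unit \<open>coassociative\<close>
    unfolding coassociative_def by simp
  moreover have "tmap id ?K (tmap id \<Delta> \<Delta>\<^sub>1) = tmap id (\<lambda>y. ?K (\<Delta> y)) \<Delta>\<^sub>1"
    by (rule tmap_id_compose[OF lK klinear_Delta])
  moreover have "(\<lambda>y. ?K (\<Delta> y)) = m a"
    by (rule ext) (simp add: Delta_mult[symmetric] counit)
  ultimately show ?thesis by simp
qed

lemma tmap_id_eps_id_Delta_unit_right:
  assumes counit: "\<And>a. eps_id \<epsilon> (\<Delta> a) = a" and coassociative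
    and unit: "assocr (tmap \<Delta> id \<Delta>\<^sub>1) = M3 (assocr (tens \<Delta>\<^sub>1 u)) (tens u \<Delta>\<^sub>1)"
  shows "tmap id (\<lambda>y. eps_id \<epsilon> (M2 (tens y u) (\<Delta> c))) \<Delta>\<^sub>1 = tmap id (\<lambda>y. m y c) \<Delta>\<^sub>1"
proof -
  let ?K = "\<lambda>Y. eps_id \<epsilon> (M2 Y (\<Delta> c))"
  have lK: "klinear ?K" by (intro klinear_Delta_intros)
  have "(\<lambda>y. eps_id \<epsilon> (M2 (tens y u) (\<Delta> c))) = (\<lambda>z. ?K (M2 (tens z u) \<Delta>\<^sub>1))"
    by (simp add: M2_assoc)
  moreover have "tmap id (\<lambda>z. ?K (M2 (tens z u) \<Delta>\<^sub>1)) \<Delta>\<^sub>1 = tmap id ?K (tmap id (\<lambda>z. M2 (tens z u) \<Delta>\<^sub>1) \<Delta>\<^sub>1)"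
    by (rule tmap_id_compose[symmetric, OF lK]) (intro klinear_Delta_intros)
  moreover have "tmap id (\<lambda>z. M2 (tens z u) \<Delta>\<^sub>1) \<Delta>\<^sub>1 = tmap id \<Delta> \<Delta>\<^sub>1"
    using M3_assocr_tens_one_one_tens[of \<Delta>\<^sub>1 \<Delta>\<^sub>1] unit \<open>coassociative\<close>
    unfolding coassociative_def by simp
  moreover have "tmap id ?K (tmap id \<Delta> \<Delta>\<^sub>1) = tmap id (\<lambda>y. ?K (\<Delta> y)) \<Delta>\<^sub>1"
    by (rule tmap_id_compose[OF lK klinear_Delta])
  moreover have "(\<lambda>y. ?K (\<Delta> y)) = (\<lambda>y. m y c)"
    by (rule ext) (simp add: Delta_mult[symmetric] counit)
  ultimately show ?thesis by simp
qed

lemma eps_id_Delta_mult_tens_one: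
  assumes counit: "\<And>a. eps_id \<epsilon> (\<Delta> a) = a" and coassociative
    and unit: "assocr (tmap \<Delta> id \<Delta>\<^sub>1) = M3 (tens u \<Delta>\<^sub>1) (assocr (tens \<Delta>\<^sub>1 u))"
    and PiL: "\<And>x. \<epsilon> (m x b) = \<epsilon> (m x (PiL \<epsilon> b))"
  shows "eps_id \<epsilon> (M2 (\<Delta> a) (tens b u)) = m a (PiL \<epsilon> b)"
proof -
  let ?H = "\<lambda>y. eps_id \<epsilon> (M2 (\<Delta> a) (tens y u))"
  have lH: "klinear ?H" by (intro klinear_Delta_intros)
  have "?H b = ?H (PiL \<epsilon> b)"
    by (rule eps_id_mult_tens_one_cong[OF PiL])
  also have "\<dots> = eps_id \<epsilon> (tmap id ?H (M2 \<Delta>\<^sub>1 (tens b u)))"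
    by (rule eps_id_tmap_id[OF fe lH])
  also have "\<dots> = eps_id \<epsilon> (M2 (tmap id ?H \<Delta>\<^sub>1) (tens b u))"
    by (simp add: tmap_id_mult_tens_one[OF lH])
  also have "\<dots> = eps_id \<epsilon> (M2 (M2 (tens u a) \<Delta>\<^sub>1) (tens b u))"
    by (simp add: tmap_id_eps_id_Delta_unit_left[OF counit \<open>coassociative\<close> unit] tmap_id_mult_left_eq)
  also have "\<dots> = m a (PiL \<epsilon> b)"
    by (simp add: M2_assoc eps_id_one_tens_mult[OF fe])
  finally show ?thesis .
qed

lemma eps_id_tens_one_mult_Delta:
  assumes counit: "\<And>a. eps_id \<epsilon> (\<Delta> a) = a" and coassociative
    and unit: "assocr (tmap \<Delta> id \<Delta>\<^sub>1) = M3 (assocr (tens \<Delta>\<^sub>1 u)) (tens u \<Delta>\<^sub>1)"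
    and PiL_bar: "\<And>z. \<epsilon> (m a z) = \<epsilon> (m (PiL_bar \<epsilon> a) z)"
  shows "eps_id \<epsilon> (M2 (tens a u) (\<Delta> c)) = m (PiL_bar \<epsilon> a) c"
proof -
  let ?H = "\<lambda>y. eps_id \<epsilon> (M2 (tens y u) (\<Delta> c))"
  have lH: "klinear ?H" by (intro klinear_Delta_intros)
  have "?H a = ?H (PiL_bar \<epsilon> a)"
    by (rule eps_id_tens_one_mult_cong[OF PiL_bar])
  also have "\<dots> = eps_id \<epsilon> (tmap id ?H (M2 (tens a u) \<Delta>\<^sub>1))"
    by (rule eps_id_tmap_id[OF fe lH])
  also have "\<dots> = eps_id \<epsilon> (M2 (tens a u) (tmap id ?H \<Delta>\<^sub>1))"
    by (simp add: tmap_id_tens_one_mult[OF lH])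
  also have "\<dots> = eps_id \<epsilon> (M2 (tens a u) (M2 \<Delta>\<^sub>1 (tens u c)))"
    by (simp add: tmap_id_eps_id_Delta_unit_right[OF counit \<open>coassociative\<close> unit] tmap_id_mult_right_eq)
  also have "\<dots> = m (PiL_bar \<epsilon> a) c"
    by (simp add: M2_assoc[symmetric] eps_id_mult_one_tens[OF fe])
  finally show ?thesis .
qed

lemma axiom_vi_left_iff:
  "(\<forall>a b c. eps_id \<epsilon> (tmap id (m a) (M2 \<Delta>\<^sub>1 (tens b c))) = eps_id \<epsilon> (M2 (\<Delta> a) (tens b c))) \<longleftrightarrow>
    (\<forall>a b. eps_id \<epsilon> (M2 (\<Delta> a) (tens b u)) = m a (PiL \<epsilon> b))"
proof -
  have split: "M2 X (tens b c) = M2 (M2 X (tens b u)) (tens u c)" for X b c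
    by (simp add: M2_assoc)
  have lhs: "eps_id \<epsilon> (tmap id (m a) (M2 \<Delta>\<^sub>1 (tens b c))) = m (m a (PiL \<epsilon> b)) c" for a b c
    by (subst split, simp only: tmap_id_mult_left_eq M2_assoc[symmetric] eps_id_mult_one_tens[OF fe])
       (simp only: M2_assoc eps_id_one_tens_mult[OF fe])
  have rhs: "eps_id \<epsilon> (M2 (\<Delta> a) (tens b c)) = m (eps_id \<epsilon> (M2 (\<Delta> a) (tens b u))) c" for a b c
    by (subst split, simp only: eps_id_mult_one_tens[OF fe])
  show ?thesis
  proof (intro iffI allI)
    fix a b
    assume vi: "\<forall>a b c. eps_id \<epsilon> (tmap id (m a) (M2 \<Delta>\<^sub>1 (tens b c))) = eps_id \<epsilon> (M2 (\<Delta> a) (tens b c))"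
    have "m a (PiL \<epsilon> b) = m (m a (PiL \<epsilon> b)) u"
      by simp
    also have "\<dots> = eps_id \<epsilon> (M2 (\<Delta> a) (tens b u))"
      using lhs[of a b u] vi by simp
    finally show "eps_id \<epsilon> (M2 (\<Delta> a) (tens b u)) = m a (PiL \<epsilon> b)"
      by (rule sym)
  next
    fix a b c
    assume A: "\<forall>a b. eps_id \<epsilon> (M2 (\<Delta> a) (tens b u)) = m a (PiL \<epsilon> b)"
    show "eps_id \<epsilon> (tmap id (m a) (M2 \<Delta>\<^sub>1 (tens b c))) = eps_id \<epsilon> (M2 (\<Delta> a) (tens b c))"
      unfolding lhs rhs[of a b c] by (simp only: A[rule_format, of a b])
  qed
qed

lemma axiom_vi_right_iff:
  "(\<forall>a b c. eps_id \<epsilon> (tmap id (\<lambda>y. m y c) (M2 (tens a b) \<Delta>\<^sub>1)) = eps_id \<epsilon> (M2 (tens a b) (\<Delta> c))) \<longleftrightarrow>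
    (\<forall>a c. eps_id \<epsilon> (M2 (tens a u) (\<Delta> c)) = m (PiL_bar \<epsilon> a) c)"
proof -
  have split: "M2 (tens a b) X = M2 (tens u b) (M2 (tens a u) X)" for X a b
    by (simp add: M2_assoc[symmetric])
  have lhs: "eps_id \<epsilon> (tmap id (\<lambda>y. m y c) (M2 (tens a b) \<Delta>\<^sub>1)) = m (m b (PiL_bar \<epsilon> a)) c" for a b c
    by (subst split, simp only: tmap_id_mult_right_eq eps_id_mult_one_tens[OF fe] eps_id_one_tens_mult[OF fe])
  have rhs: "eps_id \<epsilon> (M2 (tens a b) (\<Delta> c)) = m b (eps_id \<epsilon> (M2 (tens a u) (\<Delta> c)))" for a b c
    by (subst split, simp only: eps_id_one_tens_mult[OF fe])
  show ?thesis
  proof (intro iffI allI)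
    fix a c
    assume vi: "\<forall>a b c. eps_id \<epsilon> (tmap id (\<lambda>y. m y c) (M2 (tens a b) \<Delta>\<^sub>1)) = eps_id \<epsilon> (M2 (tens a b) (\<Delta> c))"
    have "m (PiL_bar \<epsilon> a) c = m (m u (PiL_bar \<epsilon> a)) c"
      by simp
    also have "\<dots> = eps_id \<epsilon> (M2 (tens a u) (\<Delta> c))"
      using lhs[of c a u] vi by simp
    finally show "eps_id \<epsilon> (M2 (tens a u) (\<Delta> c)) = m (PiL_bar \<epsilon> a) c"
      by (rule sym)
  next
    fix a b c
    assume B: "\<forall>a c. eps_id \<epsilon> (M2 (tens a u) (\<Delta> c)) = m (PiL_bar \<epsilon> a) c"
    show "eps_id \<epsilon> (tmap id (\<lambda>y. m y c) (M2 (tens a b) \<Delta>\<^sub>1)) = eps_id \<epsilon> (M2 (tens a b) (\<Delta> c))"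
      unfolding lhs rhs[of a b c] assoc by (simp only: B[rule_format, of a c])
  qed
qed

lemma counit_mult_PiL:
  assumes counit': "\<And>a. id_eps \<epsilon> (\<Delta> a) = a"
    and vi: "eps_id \<epsilon> (M2 (\<Delta> x) (tens c u)) = m x (PiL \<epsilon> c)"
  shows "\<epsilon> (m x c) = \<epsilon> (m x (PiL \<epsilon> c))"
proof -
  have "\<epsilon> (m x (PiL \<epsilon> c)) = \<epsilon> (eps_id \<epsilon> (M2 (\<Delta> x) (tens c u)))"
    by (simp only: vi)
  also have "\<dots> = \<epsilon> (id_eps \<epsilon> (M2 (\<Delta> x) (tens c u)))"
    by (simp only: eps_eps_eq_eps_id[OF fe, symmetric] eps_eps_eq_id_eps[OF fe])
  also have "\<dots> = \<epsilon> (m x c)"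
    by (simp only: id_eps_mult_tens_one[OF fe] counit')
  finally show ?thesis by simp
qed

lemma counit_PiL_bar_mult:
  assumes counit': "\<And>a. id_eps \<epsilon> (\<Delta> a) = a"
    and vi: "eps_id \<epsilon> (M2 (tens a u) (\<Delta> z)) = m (PiL_bar \<epsilon> a) z"
  shows "\<epsilon> (m a z) = \<epsilon> (m (PiL_bar \<epsilon> a) z)"
proof -
  have "\<epsilon> (m (PiL_bar \<epsilon> a) z) = \<epsilon> (eps_id \<epsilon> (M2 (tens a u) (\<Delta> z)))"
    by (simp only: vi)
  also have "\<dots> = \<epsilon> (id_eps \<epsilon> (M2 (tens a u) (\<Delta> z)))"
    by (simp only: eps_eps_eq_eps_id[OF fe, symmetric] eps_eps_eq_id_eps[OF fe])
  also have "\<dots> = \<epsilon> (m a z)"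
    by (simp only: id_eps_tens_one_mult[OF fe] counit')
  finally show ?thesis by simp
qed

lemma counit_PiL_of_weakly_multiplicative:
  assumes "\<And>a b c. \<epsilon> (m (m a b) c) = eps_eps \<epsilon> (M2 (M2 (tens a u) (\<Delta> b)) (tens u c))"
    and "\<And>a b c. \<epsilon> (m (m a b) c) = eps_eps \<epsilon> (M2 (M2 (tens a u) (tw (\<Delta> b))) (tens u c))"
  shows "\<epsilon> (m a z) = \<epsilon> (m (PiL_bar \<epsilon> a) z)"
    and "\<epsilon> (m x c) = \<epsilon> (m x (PiL \<epsilon> c))"
proof -
  show "\<epsilon> (m a z) = \<epsilon> (m (PiL_bar \<epsilon> a) z)"
    using assms(1)[of a u z] by (simp add: eps_eps_sandwich[OF fe])
  show "\<epsilon> (m x c) = \<epsilon> (m x (PiL \<epsilon> c))"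
    using assms(2)[of x u c] by (simp only: eps_eps_sandwich_tw[OF fe]) simp
qed

lemma weakly_multiplicative_of_counit_PiL:
  assumes A: "\<And>a b. eps_id \<epsilon> (M2 (\<Delta> a) (tens b u)) = m a (PiL \<epsilon> b)"
    and B: "\<And>a c. eps_id \<epsilon> (M2 (tens a u) (\<Delta> c)) = m (PiL_bar \<epsilon> a) c"
    and PiL_bar: "\<And>a z. \<epsilon> (m a z) = \<epsilon> (m (PiL_bar \<epsilon> a) z)"
    and PiL: "\<And>x c. \<epsilon> (m x c) = \<epsilon> (m x (PiL \<epsilon> c))"
  shows "\<epsilon> (m (m a b) c) = eps_eps \<epsilon> (M2 (M2 (tens a u) (\<Delta> b)) (tens u c))"
    and "\<epsilon> (m (m a b) c) = eps_eps \<epsilon> (M2 (M2 (tens a u) (tw (\<Delta> b))) (tens u c))"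
proof -
  have "eps_eps \<epsilon> (M2 (M2 (tens a u) (\<Delta> b)) (tens u c)) = \<epsilon> (m (PiL_bar \<epsilon> a) (m b c))"
    by (simp only: eps_eps_sandwich[OF fe] B[of a b] assoc)
  also have "\<dots> = \<epsilon> (m (m a b) c)"
    by (simp only: PiL_bar[of a "m b c", symmetric] assoc)
  finally show "\<epsilon> (m (m a b) c) = eps_eps \<epsilon> (M2 (M2 (tens a u) (\<Delta> b)) (tens u c))" ..
  have "eps_eps \<epsilon> (M2 (M2 (tens a u) (tw (\<Delta> b))) (tens u c)) = \<epsilon> (m a (m b (PiL \<epsilon> c)))"
    by (simp only: eps_eps_sandwich_tw[OF fe] A[of b c])
  also have "\<dots> = \<epsilon> (m (m a b) c)"
    by (simp only: assoc[symmetric] PiL[of "m a b" c, symmetric])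
  finally show "\<epsilon> (m (m a b) c) = eps_eps \<epsilon> (M2 (M2 (tens a u) (tw (\<Delta> b))) (tens u c))" ..
qed

lemma axiom_vi_iff:
  assumes counit: "\<forall>a. eps_id \<epsilon> (\<Delta> a) = a \<and> id_eps \<epsilon> (\<Delta> a) = a" and coassociative
    and unit_left: "assocr (tmap \<Delta> id \<Delta>\<^sub>1) = M3 (assocr (tens \<Delta>\<^sub>1 u)) (tens u \<Delta>\<^sub>1)"
    and unit_right: "assocr (tmap \<Delta> id \<Delta>\<^sub>1) = M3 (tens u \<Delta>\<^sub>1) (assocr (tens \<Delta>\<^sub>1 u))"
  shows "(\<forall>a b c.
      eps_id \<epsilon> (tmap id (m a) (fst (iota M2 \<Delta>\<^sub>1) (tens b c))) = eps_id \<epsilon> (fst (D a) (tens b c)) \<and>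
      eps_id \<epsilon> (tmap id (\<lambda>y. m y c) (snd (iota M2 \<Delta>\<^sub>1) (tens a b))) = eps_id \<epsilon> (snd (D c) (tens a b)))
    \<longleftrightarrow> (\<forall>a b c. \<epsilon> (m (m a b) c) = eps_eps \<epsilon> (M2 (M2 (tens a u) (\<Delta> b)) (tens u c)) \<and>
      \<epsilon> (m (m a b) c) = eps_eps \<epsilon> (M2 (M2 (tens a u) (tw (\<Delta> b))) (tens u c)))"
    (is "?vi \<longleftrightarrow> ?weakly_multiplicative")
proof -
  have "?vi \<longleftrightarrow> (\<forall>a b. eps_id \<epsilon> (M2 (\<Delta> a) (tens b u)) = m a (PiL \<epsilon> b)) \<and>
      (\<forall>a c. eps_id \<epsilon> (M2 (tens a u) (\<Delta> c)) = m (PiL_bar \<epsilon> a) c)"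
    by (simp only: fst_iota snd_iota comp_apply all_conj_distrib
        axiom_vi_left_iff[symmetric] axiom_vi_right_iff[symmetric])
  also have "\<dots> \<longleftrightarrow> ?weakly_multiplicative"
  proof
    assume "(\<forall>a b. eps_id \<epsilon> (M2 (\<Delta> a) (tens b u)) = m a (PiL \<epsilon> b)) \<and>
      (\<forall>a c. eps_id \<epsilon> (M2 (tens a u) (\<Delta> c)) = m (PiL_bar \<epsilon> a) c)"
    then show ?weakly_multiplicative
      using weakly_multiplicative_of_counit_PiL counit_mult_PiL counit_PiL_bar_mult counit by metis
  next
    assume ?weakly_multiplicative
    then have "\<epsilon> (m a z) = \<epsilon> (m (PiL_bar \<epsilon> a) z)" "\<epsilon> (m x c) = \<epsilon> (m x (PiL \<epsilon> c))" for a z x c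
      using counit_PiL_of_weakly_multiplicative by blast+
    then show "(\<forall>a b. eps_id \<epsilon> (M2 (\<Delta> a) (tens b u)) = m a (PiL \<epsilon> b)) \<and>
        (\<forall>a c. eps_id \<epsilon> (M2 (tens a u) (\<Delta> c)) = m (PiL_bar \<epsilon> a) c)"
      using eps_id_Delta_mult_tens_one[OF _ \<open>coassociative\<close> unit_right]
        eps_id_tens_one_mult_Delta[OF _ \<open>coassociative\<close> unit_left] counit
      by blast
  qed
  finally show ?thesis .
qed

end

lemma iota_multiplier_axioms:
  "kalgebra m \<and> (\<forall>a. \<exists>t. mu m t = a) \<and>
   (\<forall>b. (\<forall>a. m a b = 0) \<longrightarrow> b = 0) \<and> (\<forall>b. (\<forall>a. m b a = 0) \<longrightarrow> b = 0) \<and>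
   iota M2 \<Delta>\<^sub>1 \<in> multipliers M2 \<and> mmul (iota M2 \<Delta>\<^sub>1) (iota M2 \<Delta>\<^sub>1) = iota M2 \<Delta>\<^sub>1 \<and>
   (\<forall>a. D a \<in> multipliers M2) \<and>
   (\<forall>a b. D (a + b) = madd (D a) (D b)) \<and> (\<forall>c a. D (sc c a) = msc c (D a)) \<and>
   (\<forall>a b. D (m a b) = mmul (D a) (D b)) \<and>
   (\<forall>a b. (\<exists>t. iota M2 t = mmul (D a) (one_tens m b)) \<and> (\<exists>t. iota M2 t = mmul (tens_one m a) (D b))) \<and>
   kspan {fst (D a) (tens b b') | a b b'. True} = kspan {fst (iota M2 \<Delta>\<^sub>1) (tens b b') | b b'. True} \<and>
   kspan {snd (D a) (tens b b') | a b b'. True} = kspan {snd (iota M2 \<Delta>\<^sub>1) (tens b b') | b b'. True}"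
proof (intro conjI allI impI)
  show "\<exists>t. mu m t = a" for a
    by (rule exI[of _ "tens a u"]) (simp add: mu_tens[OF bilinear])
  show "b = 0" if "\<forall>a. m a b = 0" for b
    using that unit_left by metis
  show "b = 0" if "\<forall>a. m b a = 0" for b
    using that unit_right by metis
  show "\<exists>t. iota M2 t = mmul (D a) (one_tens m b)" "\<exists>t. iota M2 t = mmul (tens_one m a) (D b)" for a b
    by (auto simp: one_tens_iota tens_one_iota mmul_iota[OF algebra_M2])
qed (use kspan_Delta_mult_tens kspan_tens_mult_Delta in
      \<open>simp_all add: algebra iota_multipliers[OF algebra_M2] mmul_iota[OF algebra_M2] madd_iota msc_iota
        klinear_add[OF klinear_Delta] klinear_sc[OF klinear_Delta] Delta_mult\<close>)

lemma weak_multiplier_bialgebra_iff_weak_bialgebra: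
  "weak_multiplier_bialgebra m (iota M2 \<Delta>\<^sub>1) D \<epsilon> \<longleftrightarrow> weak_bialgebra m u \<Delta> \<epsilon>"
proof
  assume wmb: "weak_multiplier_bialgebra m (iota M2 \<Delta>\<^sub>1) D \<epsilon>"
  then have fe: "kfunctional \<epsilon>"
    unfolding weak_multiplier_bialgebra_def by blast
  from wmb have coassociative
    unfolding weak_multiplier_bialgebra_def T_commute_iff_coassociative[symmetric]
      T2_after_T1_def T1_after_T2_def by blast
  from wmb have counit: "\<forall>a. eps_id \<epsilon> (\<Delta> a) = a \<and> id_eps \<epsilon> (\<Delta> a) = a"
    unfolding weak_multiplier_bialgebra_def T_counit_iff_counit[OF fe, symmetric] by blast
  from wmb have units: "assocr (tmap \<Delta> id \<Delta>\<^sub>1) = M3 (assocr (tens \<Delta>\<^sub>1 u)) (tens u \<Delta>\<^sub>1) \<and>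
      assocr (tmap \<Delta> id \<Delta>\<^sub>1) = M3 (tens u \<Delta>\<^sub>1) (assocr (tens \<Delta>\<^sub>1 u))"
    unfolding weak_multiplier_bialgebra_def mult_ext_axiom_iff[OF \<open>coassociative\<close>, symmetric] by blast
  from wmb units have "\<forall>a b c. \<epsilon> (m (m a b) c) = eps_eps \<epsilon> (M2 (M2 (tens a u) (\<Delta> b)) (tens u c)) \<and>
      \<epsilon> (m (m a b) c) = eps_eps \<epsilon> (M2 (M2 (tens a u) (tw (\<Delta> b))) (tens u c))"
    unfolding weak_multiplier_bialgebra_def
      axiom_vi_iff[OF fe counit \<open>coassociative\<close> units[THEN conjunct1] units[THEN conjunct2], symmetric]
    by blast
  with fe \<open>coassociative\<close> counit units show "weak_bialgebra m u \<Delta> \<epsilon>"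
    unfolding weak_bialgebra_def coassociative_def using klinear_Delta Delta_mult by blast
next
  assume "weak_bialgebra m u \<Delta> \<epsilon>"
  then have fe: "kfunctional \<epsilon>" and coassociative
    and counit: "\<forall>a. eps_id \<epsilon> (\<Delta> a) = a \<and> id_eps \<epsilon> (\<Delta> a) = a"
    and units: "assocr (tmap \<Delta> id \<Delta>\<^sub>1) = M3 (assocr (tens \<Delta>\<^sub>1 u)) (tens u \<Delta>\<^sub>1)"
      "assocr (tmap \<Delta> id \<Delta>\<^sub>1) = M3 (tens u \<Delta>\<^sub>1) (assocr (tens \<Delta>\<^sub>1 u))"
    and multiplicative: "\<forall>a b c. \<epsilon> (m (m a b) c) = eps_eps \<epsilon> (M2 (M2 (tens a u) (\<Delta> b)) (tens u c)) \<and>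
      \<epsilon> (m (m a b) c) = eps_eps \<epsilon> (M2 (M2 (tens a u) (tw (\<Delta> b))) (tens u c))"
    unfolding weak_bialgebra_def coassociative_def by blast+
  note ii = T_commute_iff_coassociative[THEN iffD2, OF \<open>coassociative\<close>, unfolded T2_after_T1_def T1_after_T2_def]
  note iii = T_counit_iff_counit[OF fe, THEN iffD2, OF counit]
  note v = mult_ext_axiom_iff[OF \<open>coassociative\<close>, THEN iffD2, OF conjI, OF units]
  note vi = axiom_vi_iff[OF fe counit \<open>coassociative\<close> units, THEN iffD2, OF multiplicative]
  show "weak_multiplier_bialgebra m (iota M2 \<Delta>\<^sub>1) D \<epsilon>"
    unfolding weak_multiplier_bialgebra_def using iota_multiplier_axioms fe ii iii v vi by blast
qed

end

lemma weak_bialgebra_comultiplication: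
  assumes "unital_algebra m u" "weak_bialgebra m u \<Delta> \<epsilon>"
  shows "comultiplication m u \<Delta>"
  using assms unfolding comultiplication_def comultiplication_axioms_def unital_def weak_bialgebra_def
  by blast

lemma weak_multiplier_bialgebra_comultiplication:
  assumes unital: "unital_algebra m u" and wmb: "weak_multiplier_bialgebra m E D \<epsilon>"
  obtains \<Delta> where "comultiplication m u \<Delta>" "D = iota (tmult m m) \<circ> \<Delta>" "E = iota (tmult m m) (\<Delta> u)"
proof -
  interpret unital m u by (rule unital.intro) (rule unital)
  define \<Delta> where "\<Delta> a = snd (D a) u2" for a
  have D_eq: "D a = iota M2 (\<Delta> a)" for a
    unfolding \<Delta>_def
    by (rule multipliers_iota[OF unital_M2]) (use wmb in \<open>simp add: weak_multiplier_bialgebra_def\<close>)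
  have D_add: "D (a + b) = madd (D a) (D b)" and D_sc: "D (sc c a) = msc c (D a)"
    and D_mult: "D (m a b) = mmul (D a) (D b)" for a b c
    using wmb unfolding weak_multiplier_bialgebra_def by blast+
  have "klinear \<Delta>"
  proof (rule klinearI)
    show "\<Delta> (a + b) = \<Delta> a + \<Delta> b" for a b
      using D_add[of a b] unfolding D_eq madd_iota[OF kbilinear_tmult] by (rule iota_inj[OF unital_M2])
    show "\<Delta> (sc c a) = sc c (\<Delta> a)" for c a
      using D_sc[of c a] unfolding D_eq msc_iota[OF kbilinear_tmult] by (rule iota_inj[OF unital_M2])
  qed
  moreover have "\<Delta> (m a b) = M2 (\<Delta> a) (\<Delta> b)" for a b
    using D_mult[of a b] unfolding D_eq mmul_iota[OF algebra_M2] by (rule iota_inj[OF unital_M2])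
  ultimately interpret comultiplication m u \<Delta>
    by unfold_locales
  have D: "D = iota M2 \<circ> \<Delta>"
    using D_eq by auto
  have "E = iota M2 \<Delta>\<^sub>1"
    using wmb unfolding D weak_multiplier_bialgebra_def
    by (intro idempotent_multiplier_eq_Delta_unit) blast+
  with D that comultiplication_axioms show ?thesis
    by blast
qed

theorem theorem2p10:
  fixes m :: "('b \<Rightarrow>\<^sub>0 'k::field) \<Rightarrow> ('b \<Rightarrow>\<^sub>0 'k) \<Rightarrow> ('b \<Rightarrow>\<^sub>0 'k)"
    and u :: "'b \<Rightarrow>\<^sub>0 'k"
  assumes "unital_algebra m u"
  shows "bij_betw (\<lambda>(\<Delta>, \<epsilon>). (iota (tmult m m) (\<Delta> u), iota (tmult m m) \<circ> \<Delta>, \<epsilon>))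
           {(\<Delta>, \<epsilon>). weak_bialgebra m u \<Delta> \<epsilon>}
           {(E, D, \<epsilon>). weak_multiplier_bialgebra m E D \<epsilon>}"
proof -
  interpret unital m u by (rule unital.intro) (rule assms)
  have "inj_on (\<lambda>(\<Delta>, \<epsilon>). (iota M2 (\<Delta> u), iota M2 \<circ> \<Delta>, \<epsilon>)) {(\<Delta>, \<epsilon>). weak_bialgebra m u \<Delta> \<epsilon>}"
    by (rule inj_onI) (auto dest: iota_comp_cancel)
  moreover have "weak_multiplier_bialgebra m (iota M2 (\<Delta> u)) (iota M2 \<circ> \<Delta>) \<epsilon>"
    if "weak_bialgebra m u \<Delta> \<epsilon>" for \<Delta> \<epsilon>
    using that comultiplication.weak_multiplier_bialgebra_iff_weak_bialgebra
      weak_bialgebra_comultiplication[OF assms] by blast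
  moreover have "(E, D, \<epsilon>) \<in> (\<lambda>(\<Delta>, \<epsilon>). (iota M2 (\<Delta> u), iota M2 \<circ> \<Delta>, \<epsilon>)) ` {(\<Delta>, \<epsilon>). weak_bialgebra m u \<Delta> \<epsilon>}"
    if wmb: "weak_multiplier_bialgebra m E D \<epsilon>" for E D \<epsilon>
  proof -
    obtain \<Delta> where \<Delta>: "comultiplication m u \<Delta>" "D = iota M2 \<circ> \<Delta>" "E = iota M2 (\<Delta> u)"
      using weak_multiplier_bialgebra_comultiplication[OF assms wmb] by blast
    then have "weak_bialgebra m u \<Delta> \<epsilon>"
      using wmb comultiplication.weak_multiplier_bialgebra_iff_weak_bialgebra by blast
    with \<Delta> show ?thesis by force
  qed
  ultimately show ?thesis
    unfolding bij_betw_def by auto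
qed
end
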